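(* Let $\mathcal A$ be an abelian category and $\mathcal T$ a full subcategory consisting of projective objects, closed under finite direct sums and direct summands. The following are equivalent: (1) $\underline{\mathcal A}=\mathcal A/\langle\mathcal T\rangle$ is balanced; (2) if $\mu:K\to X$ is a non-split monomorphism which factors through an object of $\mathcal T$, then there is a morphism $h:X\to T'$ with $T'\in\mathcal T$ such that no morphism $\tilde h:X\to(h\mu)(K)$ coincides with $h$ on $K$; (3) if $\mu:T\to X$ is a non-split monomorphism with $T\in\mathcal T$, then there is a morphism $h:X\to T'$ with $T'\in\mathcal T$ such that no morphism $\tilde h:X\to(h\mu)(T)$ coincides with $h$ on $T$; (4) every epimorphism $f:X\to Y$ satisfying (i) $f^k:\ker(f)\to X$ factors through an object of $\mathcal T$, and (ii) for every $h:X\to T$ with $T\in\mathcal T$ the canonical epimorphism $\ker(f)\twoheadrightarrow h(\ker f)$ factors through $f^k$, is a retraction; (5) for every non-split epimorphism $f:X\to Y$ with $\ker(f)\in\mathcal T$ there is a morphism $h:X\to T'$ with $T'\in\mathcal T$ such that for every morphism $g:Y\to T'$ the subobject $\ker(f)+\ker(h-gf)$ of $X$ is strictly contained in $X$.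
   Context: $\underline{\mathcal A}=\mathcal A/\langle\mathcal T\rangle$ is the stable category (same objects, morphisms modulo those factoring through an object of $\mathcal T$). A category is balanced if every morphism that is both a monomorphism and an epimorphism is an isomorphism. For a subobject $\kappa:K\hookrightarrow X$ and a morphism $h:X\to T$, $h(K)$ denotes the image of $h\kappa$ with canonical inclusion $j:h(K)\hookrightarrow T$, and $(h\mu)(K)$ the image of $h\mu$; a morphism $\tilde h:X\to h(K)$ coincides with $h$ on $K$ if $j\tilde h\kappa=h\kappa$. $f^k$ denotes the kernel morphism of $f$. *)

theory Defs
  imports Main
begin

record ('o, 'm) cat =
  Obj :: "'o set"
  Arr :: "'m set"
  Dom :: "'m \<Rightarrow> 'o"
  Cod :: "'m \<Rightarrow> 'o"
  Cmp :: "'m \<Rightarrow> 'm \<Rightarrow> 'm"   (* Cmp C g f = g \<circ> f *)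
  Idn :: "'o \<Rightarrow> 'm"
  Add :: "'m \<Rightarrow> 'm \<Rightarrow> 'm"
  Neg :: "'m \<Rightarrow> 'm"
  Zer :: "'o \<Rightarrow> 'o \<Rightarrow> 'm"

definition hom :: "('o,'m) cat \<Rightarrow> 'o \<Rightarrow> 'o \<Rightarrow> 'm set" where
  "hom C X Y = {f \<in> Arr C. Dom C f = X \<and> Cod C f = Y}"

definition category :: "('o,'m) cat \<Rightarrow> bool" where
  "category C \<longleftrightarrow>
     (\<forall>f\<in>Arr C. Dom C f \<in> Obj C \<and> Cod C f \<in> Obj C)
   \<and> (\<forall>X\<in>Obj C. Idn C X \<in> hom C X X)
   \<and> (\<forall>X Y Z f g. f \<in> hom C X Y \<longrightarrow> g \<in> hom C Y Z \<longrightarrow> Cmp C g f \<in> hom C X Z)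
   \<and> (\<forall>W X Y Z f g h. f \<in> hom C W X \<longrightarrow> g \<in> hom C X Y \<longrightarrow> h \<in> hom C Y Z \<longrightarrow>
        Cmp C h (Cmp C g f) = Cmp C (Cmp C h g) f)
   \<and> (\<forall>X Y f. f \<in> hom C X Y \<longrightarrow> Cmp C (Idn C Y) f = f \<and> Cmp C f (Idn C X) = f)"

definition preadditive :: "('o,'m) cat \<Rightarrow> bool" where
  "preadditive C \<longleftrightarrow> category C \<and>
    (\<forall>X\<in>Obj C. \<forall>Y\<in>Obj C.
       Zer C X Y \<in> hom C X Y
     \<and> (\<forall>f\<in>hom C X Y. \<forall>g\<in>hom C X Y. Add C f g \<in> hom C X Y)
     \<and> (\<forall>f\<in>hom C X Y. Neg C f \<in> hom C X Y)
     \<and> (\<forall>f\<in>hom C X Y. \<forall>g\<in>hom C X Y. \<forall>h\<in>hom C X Y.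
           Add C (Add C f g) h = Add C f (Add C g h))
     \<and> (\<forall>f\<in>hom C X Y. \<forall>g\<in>hom C X Y. Add C f g = Add C g f)
     \<and> (\<forall>f\<in>hom C X Y. Add C f (Zer C X Y) = f)
     \<and> (\<forall>f\<in>hom C X Y. Add C f (Neg C f) = Zer C X Y)
     \<and> (\<forall>Z\<in>Obj C. \<forall>f\<in>hom C X Y. \<forall>f'\<in>hom C X Y. \<forall>g\<in>hom C Y Z.
           Cmp C g (Add C f f') = Add C (Cmp C g f) (Cmp C g f'))
     \<and> (\<forall>Z\<in>Obj C. \<forall>f\<in>hom C X Y. \<forall>g\<in>hom C Y Z. \<forall>g'\<in>hom C Y Z.
           Cmp C (Add C g g') f = Add C (Cmp C g f) (Cmp C g' f)))"

definition zero_obj :: "('o,'m) cat \<Rightarrow> 'o \<Rightarrow> bool" where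
  "zero_obj C Z \<longleftrightarrow> Z \<in> Obj C \<and>
     (\<forall>X\<in>Obj C. (\<exists>!f. f \<in> hom C Z X) \<and> (\<exists>!f. f \<in> hom C X Z))"

definition is_biproduct ::
  "('o,'m) cat \<Rightarrow> 'o \<Rightarrow> 'o \<Rightarrow> 'o \<Rightarrow> 'm \<Rightarrow> 'm \<Rightarrow> 'm \<Rightarrow> 'm \<Rightarrow> bool" where
  "is_biproduct C X Y P i1 i2 p1 p2 \<longleftrightarrow>
     P \<in> Obj C \<and> i1 \<in> hom C X P \<and> i2 \<in> hom C Y P \<and> p1 \<in> hom C P X \<and> p2 \<in> hom C P Y
   \<and> Cmp C p1 i1 = Idn C X \<and> Cmp C p2 i2 = Idn C Y
   \<and> Cmp C p2 i1 = Zer C X Y \<and> Cmp C p1 i2 = Zer C Y X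
   \<and> Add C (Cmp C i1 p1) (Cmp C i2 p2) = Idn C P"

definition mono :: "('o,'m) cat \<Rightarrow> 'm \<Rightarrow> bool" where
  "mono C f \<longleftrightarrow> f \<in> Arr C \<and>
     (\<forall>g h. g \<in> Arr C \<longrightarrow> h \<in> Arr C \<longrightarrow> Dom C g = Dom C h \<longrightarrow>
        Cod C g = Dom C f \<longrightarrow> Cod C h = Dom C f \<longrightarrow> Cmp C f g = Cmp C f h \<longrightarrow> g = h)"

definition epi :: "('o,'m) cat \<Rightarrow> 'm \<Rightarrow> bool" where
  "epi C f \<longleftrightarrow> f \<in> Arr C \<and>
     (\<forall>g h. g \<in> Arr C \<longrightarrow> h \<in> Arr C \<longrightarrow> Cod C g = Cod C h \<longrightarrow>
        Dom C g = Cod C f \<longrightarrow> Dom C h = Cod C f \<longrightarrow> Cmp C g f = Cmp C h f \<longrightarrow> g = h)"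

definition iso :: "('o,'m) cat \<Rightarrow> 'm \<Rightarrow> bool" where
  "iso C f \<longleftrightarrow> f \<in> Arr C \<and>
     (\<exists>g\<in>hom C (Cod C f) (Dom C f).
        Cmp C g f = Idn C (Dom C f) \<and> Cmp C f g = Idn C (Cod C f))"

definition is_kernel :: "('o,'m) cat \<Rightarrow> 'm \<Rightarrow> 'm \<Rightarrow> bool" where
  "is_kernel C f k \<longleftrightarrow> f \<in> Arr C \<and> k \<in> Arr C \<and> Cod C k = Dom C f
   \<and> Cmp C f k = Zer C (Dom C k) (Cod C f)
   \<and> (\<forall>g\<in>Arr C. Cod C g = Dom C f \<longrightarrow> Cmp C f g = Zer C (Dom C g) (Cod C f) \<longrightarrow>
        (\<exists>!u. u \<in> hom C (Dom C g) (Dom C k) \<and> Cmp C k u = g))"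

definition is_cokernel :: "('o,'m) cat \<Rightarrow> 'm \<Rightarrow> 'm \<Rightarrow> bool" where
  "is_cokernel C f c \<longleftrightarrow> f \<in> Arr C \<and> c \<in> Arr C \<and> Dom C c = Cod C f
   \<and> Cmp C c f = Zer C (Dom C f) (Cod C c)
   \<and> (\<forall>g\<in>Arr C. Dom C g = Cod C f \<longrightarrow> Cmp C g f = Zer C (Dom C f) (Cod C g) \<longrightarrow>
        (\<exists>!u. u \<in> hom C (Cod C c) (Cod C g) \<and> Cmp C u c = g))"

definition abelian :: "('o,'m) cat \<Rightarrow> bool" where
  "abelian C \<longleftrightarrow> preadditive C
   \<and> (\<exists>Z. zero_obj C Z)
   \<and> (\<forall>X\<in>Obj C. \<forall>Y\<in>Obj C. \<exists>P i1 i2 p1 p2. is_biproduct C X Y P i1 i2 p1 p2)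
   \<and> (\<forall>f\<in>Arr C. (\<exists>k. is_kernel C f k) \<and> (\<exists>c. is_cokernel C f c))
   \<and> (\<forall>f. mono C f \<longrightarrow> (\<exists>g. is_kernel C g f))
   \<and> (\<forall>f. epi C f \<longrightarrow> (\<exists>g. is_cokernel C g f))"

definition projective :: "('o,'m) cat \<Rightarrow> 'o \<Rightarrow> bool" where
  "projective C P \<longleftrightarrow> P \<in> Obj C \<and>
     (\<forall>e g. epi C e \<longrightarrow> g \<in> hom C P (Cod C e) \<longrightarrow>
        (\<exists>u\<in>hom C P (Dom C e). Cmp C e u = g))"

text \<open>A full subcategory (given by its class of objects T) consisting of projectives,
  closed under finite direct sums (including the empty sum) and direct summands.\<close>
definition proj_subcat :: "('o,'m) cat \<Rightarrow> 'o set \<Rightarrow> bool" where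
  "proj_subcat C T \<longleftrightarrow> T \<subseteq> Obj C
   \<and> (\<forall>P\<in>T. projective C P)
   \<and> (\<forall>Z. zero_obj C Z \<longrightarrow> Z \<in> T)
   \<and> (\<forall>X Y P i1 i2 p1 p2. X \<in> T \<longrightarrow> Y \<in> T \<longrightarrow> is_biproduct C X Y P i1 i2 p1 p2 \<longrightarrow> P \<in> T)
   \<and> (\<forall>X Y P i1 i2 p1 p2. P \<in> T \<longrightarrow> is_biproduct C X Y P i1 i2 p1 p2 \<longrightarrow> X \<in> T)"

definition factors_T :: "('o,'m) cat \<Rightarrow> 'o set \<Rightarrow> 'm \<Rightarrow> bool" where
  "factors_T C T f \<longleftrightarrow> (\<exists>T'\<in>T. \<exists>a b. a \<in> hom C (Dom C f) T' \<and> b \<in> hom C T' (Cod C f)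
                        \<and> f = Cmp C b a)"

definition stable_eq :: "('o,'m) cat \<Rightarrow> 'o set \<Rightarrow> 'm \<Rightarrow> 'm \<Rightarrow> bool" where
  "stable_eq C T f g \<longleftrightarrow> factors_T C T (Add C f (Neg C g))"

definition stable_mono :: "('o,'m) cat \<Rightarrow> 'o set \<Rightarrow> 'm \<Rightarrow> bool" where
  "stable_mono C T f \<longleftrightarrow> f \<in> Arr C \<and>
     (\<forall>W g h. g \<in> hom C W (Dom C f) \<longrightarrow> h \<in> hom C W (Dom C f) \<longrightarrow>
        stable_eq C T (Cmp C f g) (Cmp C f h) \<longrightarrow> stable_eq C T g h)"

definition stable_epi :: "('o,'m) cat \<Rightarrow> 'o set \<Rightarrow> 'm \<Rightarrow> bool" where
  "stable_epi C T f \<longleftrightarrow> f \<in> Arr C \<and>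
     (\<forall>W g h. g \<in> hom C (Cod C f) W \<longrightarrow> h \<in> hom C (Cod C f) W \<longrightarrow>
        stable_eq C T (Cmp C g f) (Cmp C h f) \<longrightarrow> stable_eq C T g h)"

definition stable_iso :: "('o,'m) cat \<Rightarrow> 'o set \<Rightarrow> 'm \<Rightarrow> bool" where
  "stable_iso C T f \<longleftrightarrow> f \<in> Arr C \<and>
     (\<exists>g\<in>hom C (Cod C f) (Dom C f).
        stable_eq C T (Cmp C g f) (Idn C (Dom C f)) \<and> stable_eq C T (Cmp C f g) (Idn C (Cod C f)))"

definition stable_balanced :: "('o,'m) cat \<Rightarrow> 'o set \<Rightarrow> bool" where
  "stable_balanced C T \<longleftrightarrow>
     (\<forall>f\<in>Arr C. stable_mono C T f \<longrightarrow> stable_epi C T f \<longrightarrow> stable_iso C T f)"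

text \<open>f = j \<circ> e is an (epi, mono) image factorisation; Dom j is the image of f\<close>
definition is_image_fact :: "('o,'m) cat \<Rightarrow> 'm \<Rightarrow> 'm \<Rightarrow> 'm \<Rightarrow> bool" where
  "is_image_fact C f e j \<longleftrightarrow> f \<in> Arr C \<and> epi C e \<and> mono C j
     \<and> Dom C e = Dom C f \<and> Cod C j = Cod C f \<and> Cod C e = Dom C j \<and> Cmp C j e = f"

definition split_mono :: "('o,'m) cat \<Rightarrow> 'm \<Rightarrow> bool" where
  "split_mono C m \<longleftrightarrow> (\<exists>r\<in>hom C (Cod C m) (Dom C m). Cmp C r m = Idn C (Dom C m))"

definition retraction :: "('o,'m) cat \<Rightarrow> 'm \<Rightarrow> bool" where
  "retraction C f \<longleftrightarrow> (\<exists>s\<in>hom C (Cod C f) (Dom C f). Cmp C f s = Idn C (Cod C f))"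

text \<open>For mu : K \<rightarrow> X and h : X \<rightarrow> T': no morphism X \<rightarrow> (h mu)(K) coincides with h on K.\<close>
definition no_coinciding :: "('o,'m) cat \<Rightarrow> 'm \<Rightarrow> 'm \<Rightarrow> bool" where
  "no_coinciding C mu h \<longleftrightarrow>
     (\<forall>e j. is_image_fact C (Cmp C h mu) e j \<longrightarrow>
        \<not> (\<exists>ht\<in>hom C (Cod C mu) (Dom C j). Cmp C j (Cmp C ht mu) = Cmp C h mu))"

text \<open>The sum k1 + k2 of two subobjects of X (image of the induced map from the
  direct sum) is strictly contained in X.\<close>
definition proper_sum :: "('o,'m) cat \<Rightarrow> 'm \<Rightarrow> 'm \<Rightarrow> bool" where
  "proper_sum C k1 k2 \<longleftrightarrow>
     (\<forall>P i1 i2 p1 p2 e j. is_biproduct C (Dom C k1) (Dom C k2) P i1 i2 p1 p2 \<longrightarrow>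
        is_image_fact C (Add C (Cmp C k1 p1) (Cmp C k2 p2)) e j \<longrightarrow> \<not> iso C j)"

definition cond2 :: "('o,'m) cat \<Rightarrow> 'o set \<Rightarrow> bool" where
  "cond2 C T \<longleftrightarrow> (\<forall>mu. mono C mu \<longrightarrow> \<not> split_mono C mu \<longrightarrow> factors_T C T mu \<longrightarrow>
     (\<exists>T'\<in>T. \<exists>h\<in>hom C (Cod C mu) T'. no_coinciding C mu h))"

definition cond3 :: "('o,'m) cat \<Rightarrow> 'o set \<Rightarrow> bool" where
  "cond3 C T \<longleftrightarrow> (\<forall>mu. mono C mu \<longrightarrow> \<not> split_mono C mu \<longrightarrow> Dom C mu \<in> T \<longrightarrow>
     (\<exists>T'\<in>T. \<exists>h\<in>hom C (Cod C mu) T'. no_coinciding C mu h))"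

definition cond4 :: "('o,'m) cat \<Rightarrow> 'o set \<Rightarrow> bool" where
  "cond4 C T \<longleftrightarrow> (\<forall>f k. epi C f \<longrightarrow> is_kernel C f k \<longrightarrow>
     factors_T C T k \<longrightarrow>
     (\<forall>T0\<in>T. \<forall>h\<in>hom C (Dom C f) T0. \<forall>e j. is_image_fact C (Cmp C h k) e j \<longrightarrow>
         (\<exists>u\<in>hom C (Dom C f) (Cod C e). Cmp C u k = e)) \<longrightarrow>
     retraction C f)"

definition cond5 :: "('o,'m) cat \<Rightarrow> 'o set \<Rightarrow> bool" where
  "cond5 C T \<longleftrightarrow> (\<forall>f k. epi C f \<longrightarrow> \<not> retraction C f \<longrightarrow> is_kernel C f k \<longrightarrow> Dom C k \<in> T \<longrightarrow>
     (\<exists>T'\<in>T. \<exists>h\<in>hom C (Dom C f) T'. \<forall>g\<in>hom C (Cod C f) T'.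
        \<forall>k'. is_kernel C (Add C h (Neg C (Cmp C g f))) k' \<longrightarrow> proper_sum C k k'))"

end

(*
  Morphisms factoring through T form an ideal, so the stable notions can be tested on such
  factorisations, and projectivity of T lets them be lifted along epimorphisms.  A stable
  bimorphism f that is not a stable isomorphism is first replaced by an epimorphism with kernel
  factoring through T (add a T-summand to the domain covering the cokernel of f), and then, by
  pushing the kernel out along its factorisation, by an epimorphism g with kernel mu in T.  For
  such g, being a stable isomorphism is the same as being a retraction, i.e. mu splitting.  So A/<T>
  is balanced iff every stable epimorphism with kernel in T splits, and each of (2)-(5) is a way
  of testing that g is a stable epimorphism: g is one iff for every h : X -> T' the image
  epimorphism of h mu extends along mu to X, and iff ker g + ker (h - g' g) = X for some g'.
*)
theory Submission
  imports Defs
begin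

section \<open>Preadditive and abelian categories\<close>

locale is_category =
  fixes C :: "('o, 'm) cat"
  assumes category: "category C"
begin

abbreviation cmp (infixr "\<cdot>" 75) where "g \<cdot> f \<equiv> Cmp C g f"

lemma arr_dom [simp]: "f \<in> Arr C \<Longrightarrow> Dom C f \<in> Obj C"
  and arr_cod [simp]: "f \<in> Arr C \<Longrightarrow> Cod C f \<in> Obj C"
  using category unfolding category_def by blast+

lemma comp_in_hom: "f \<in> Arr C \<Longrightarrow> g \<in> Arr C \<Longrightarrow> Cod C f = Dom C g \<Longrightarrow>
    g \<cdot> f \<in> hom C (Dom C f) (Cod C g)"
  using category unfolding category_def hom_def by blast

lemma
  assumes "f \<in> Arr C" "g \<in> Arr C" "Cod C f = Dom C g"
  shows comp_arr [simp]: "g \<cdot> f \<in> Arr C"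
    and dom_comp [simp]: "Dom C (g \<cdot> f) = Dom C f"
    and cod_comp [simp]: "Cod C (g \<cdot> f) = Cod C g"
  using comp_in_hom[OF assms] by (simp_all add: hom_def)

lemma comp_assoc [simp]:
  assumes "f \<in> Arr C" "g \<in> Arr C" "h \<in> Arr C" "Cod C f = Dom C g" "Cod C g = Dom C h"
  shows "(h \<cdot> g) \<cdot> f = h \<cdot> (g \<cdot> f)"
proof -
  have "f \<in> hom C (Dom C f) (Cod C f)" "g \<in> hom C (Cod C f) (Cod C g)" "h \<in> hom C (Cod C g) (Cod C h)"
    using assms by (auto simp: hom_def)
  then show ?thesis using category unfolding category_def by metis
qed

lemma comp_assoc_eq: "a \<cdot> b = c \<Longrightarrow> a \<in> Arr C \<Longrightarrow> b \<in> Arr C \<Longrightarrow> x \<in> Arr C \<Longrightarrow>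
    Cod C x = Dom C b \<Longrightarrow> Cod C b = Dom C a \<Longrightarrow> a \<cdot> (b \<cdot> x) = c \<cdot> x"
  using comp_assoc[of x b a] by simp

lemma arr_idn [simp]: "X \<in> Obj C \<Longrightarrow> Idn C X \<in> Arr C"
  and dom_idn [simp]: "X \<in> Obj C \<Longrightarrow> Dom C (Idn C X) = X"
  and cod_idn [simp]: "X \<in> Obj C \<Longrightarrow> Cod C (Idn C X) = X"
  using category unfolding category_def hom_def by blast+

lemma comp_idn_left [simp]: "f \<in> Arr C \<Longrightarrow> Cod C f = Y \<Longrightarrow> Idn C Y \<cdot> f = f"
  and comp_idn_right [simp]: "f \<in> Arr C \<Longrightarrow> Dom C f = X \<Longrightarrow> f \<cdot> Idn C X = f"
  using category unfolding category_def hom_def by blast+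

lemma monoD: "mono C m \<Longrightarrow> a \<in> Arr C \<Longrightarrow> b \<in> Arr C \<Longrightarrow> Dom C b = Dom C a \<Longrightarrow>
    Cod C a = Dom C m \<Longrightarrow> Cod C b = Dom C m \<Longrightarrow> m \<cdot> a = m \<cdot> b \<Longrightarrow> a = b"
  unfolding mono_def by metis

lemma epiD: "epi C e \<Longrightarrow> a \<in> Arr C \<Longrightarrow> b \<in> Arr C \<Longrightarrow> Cod C b = Cod C a \<Longrightarrow>
    Dom C a = Cod C e \<Longrightarrow> Dom C b = Cod C e \<Longrightarrow> a \<cdot> e = b \<cdot> e \<Longrightarrow> a = b"
  unfolding epi_def by metis

lemma mono_arr: "mono C m \<Longrightarrow> m \<in> Arr C"
  and epi_arr: "epi C e \<Longrightarrow> e \<in> Arr C"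
  by (simp_all add: mono_def epi_def)

lemma mono_comp:
  assumes m: "mono C m" and n: "mono C n" and mn: "Cod C n = Dom C m"
  shows "mono C (m \<cdot> n)"
  unfolding mono_def
proof (intro conjI allI impI)
  show "m \<cdot> n \<in> Arr C" using m n mn by (simp add: mono_arr)
  fix a b assume ab: "a \<in> Arr C" "b \<in> Arr C" "Dom C a = Dom C b"
    "Cod C a = Dom C (m \<cdot> n)" "Cod C b = Dom C (m \<cdot> n)" "(m \<cdot> n) \<cdot> a = (m \<cdot> n) \<cdot> b"
  then have "m \<cdot> (n \<cdot> a) = m \<cdot> (n \<cdot> b)" using m n mn by (simp add: mono_arr)
  then have "n \<cdot> a = n \<cdot> b" using monoD[OF m] ab m n mn by (simp add: mono_arr)
  then show "a = b" using monoD[OF n] ab m n mn by (simp add: mono_arr)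
qed

lemma epi_comp:
  assumes e: "epi C e" and f: "epi C f" and ef: "Cod C f = Dom C e"
  shows "epi C (e \<cdot> f)"
  unfolding epi_def
proof (intro conjI allI impI)
  show "e \<cdot> f \<in> Arr C" using e f ef by (simp add: epi_arr)
  fix a b assume ab: "a \<in> Arr C" "b \<in> Arr C" "Cod C a = Cod C b"
    "Dom C a = Cod C (e \<cdot> f)" "Dom C b = Cod C (e \<cdot> f)" "a \<cdot> (e \<cdot> f) = b \<cdot> (e \<cdot> f)"
  then have "(a \<cdot> e) \<cdot> f = (b \<cdot> e) \<cdot> f" using e f ef by (simp add: epi_arr)
  then have "a \<cdot> e = b \<cdot> e" using epiD[OF f] ab e f ef by (simp add: epi_arr)
  then show "a = b" using epiD[OF e] ab e f ef by (simp add: epi_arr)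
qed

lemma mono_cancel:
  assumes mn: "mono C (m \<cdot> n)" and "m \<in> Arr C" "n \<in> Arr C" "Cod C n = Dom C m"
  shows "mono C n"
  unfolding mono_def
proof (intro conjI allI impI)
  fix a b assume "a \<in> Arr C" "b \<in> Arr C" "Dom C a = Dom C b"
    "Cod C a = Dom C n" "Cod C b = Dom C n" "n \<cdot> a = n \<cdot> b"
  moreover from this have "(m \<cdot> n) \<cdot> a = (m \<cdot> n) \<cdot> b" using assms by simp
  ultimately show "a = b" using monoD[OF mn] assms by simp
qed (use assms in simp)

lemma epi_cancel:
  assumes ef: "epi C (e \<cdot> f)" and "e \<in> Arr C" "f \<in> Arr C" "Cod C f = Dom C e"
  shows "epi C e"
  unfolding epi_def
proof (intro conjI allI impI)
  fix a b assume "a \<in> Arr C" "b \<in> Arr C" "Cod C a = Cod C b"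
    "Dom C a = Cod C e" "Dom C b = Cod C e" "a \<cdot> e = b \<cdot> e"
  moreover from this have "a \<cdot> (e \<cdot> f) = b \<cdot> (e \<cdot> f)" using assms by (simp flip: comp_assoc)
  ultimately show "a = b" using epiD[OF ef] assms by simp
qed (use assms in simp)

lemma iso_epi:
  assumes "iso C f" shows "epi C f"
proof -
  obtain g where f: "f \<in> Arr C" and g: "g \<in> hom C (Cod C f) (Dom C f)" "f \<cdot> g = Idn C (Cod C f)"
    using assms unfolding iso_def by blast
  have "epi C (Idn C (Cod C f))"
    unfolding epi_def using f by auto
  then show ?thesis using epi_cancel[of f g] f g by (simp add: hom_def)
qed

lemma iso_idn: "X \<in> Obj C \<Longrightarrow> iso C (Idn C X)"
  unfolding iso_def by (auto simp: hom_def intro!: bexI[of _ "Idn C X"])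

lemma mono_idn: "X \<in> Obj C \<Longrightarrow> mono C (Idn C X)"
  unfolding mono_def by auto

end

locale is_preadditive =
  fixes C :: "('o, 'm) cat"
  assumes preadditive: "preadditive C"

sublocale is_preadditive \<subseteq> is_category
  using preadditive by unfold_locales (simp add: preadditive_def)

context is_preadditive
begin

abbreviation add (infixr "\<oplus>" 65) where "f \<oplus> g \<equiv> Add C f g"
abbreviation diff (infixr "\<ominus>" 65) where "f \<ominus> g \<equiv> Add C f (Neg C g)"

lemma hom_group_axioms:
  assumes "X \<in> Obj C" "Y \<in> Obj C"
  shows "Zer C X Y \<in> hom C X Y"
    and "\<forall>f\<in>hom C X Y. \<forall>g\<in>hom C X Y. f \<oplus> g \<in> hom C X Y"
    and "\<forall>f\<in>hom C X Y. Neg C f \<in> hom C X Y"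
    and "\<forall>f\<in>hom C X Y. \<forall>g\<in>hom C X Y. \<forall>h\<in>hom C X Y. (f \<oplus> g) \<oplus> h = f \<oplus> (g \<oplus> h)"
    and "\<forall>f\<in>hom C X Y. \<forall>g\<in>hom C X Y. f \<oplus> g = g \<oplus> f"
    and "\<forall>f\<in>hom C X Y. f \<oplus> Zer C X Y = f"
    and "\<forall>f\<in>hom C X Y. f \<ominus> f = Zer C X Y"
    and "\<forall>Z\<in>Obj C. \<forall>f\<in>hom C X Y. \<forall>f'\<in>hom C X Y. \<forall>g\<in>hom C Y Z.
      g \<cdot> (f \<oplus> f') = g \<cdot> f \<oplus> g \<cdot> f'"
    and "\<forall>Z\<in>Obj C. \<forall>f\<in>hom C X Y. \<forall>g\<in>hom C Y Z. \<forall>g'\<in>hom C Y Z.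
      (g \<oplus> g') \<cdot> f = g \<cdot> f \<oplus> g' \<cdot> f"
  using preadditive assms unfolding preadditive_def by blast+

lemma arr_zer [simp]: "X \<in> Obj C \<Longrightarrow> Y \<in> Obj C \<Longrightarrow> Zer C X Y \<in> Arr C"
  and dom_zer [simp]: "X \<in> Obj C \<Longrightarrow> Y \<in> Obj C \<Longrightarrow> Dom C (Zer C X Y) = X"
  and cod_zer [simp]: "X \<in> Obj C \<Longrightarrow> Y \<in> Obj C \<Longrightarrow> Cod C (Zer C X Y) = Y"
  using hom_group_axioms(1) unfolding hom_def by blast+

lemma add_in_hom: "f \<in> Arr C \<Longrightarrow> g \<in> Arr C \<Longrightarrow> Dom C g = Dom C f \<Longrightarrow> Cod C g = Cod C f \<Longrightarrow>
    f \<oplus> g \<in> hom C (Dom C f) (Cod C f)"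
  using hom_group_axioms(2)[of "Dom C f" "Cod C f"] by (simp add: hom_def)

lemma
  assumes "f \<in> Arr C" "g \<in> Arr C" "Dom C g = Dom C f" "Cod C g = Cod C f"
  shows arr_add [simp]: "f \<oplus> g \<in> Arr C"
    and dom_add [simp]: "Dom C (f \<oplus> g) = Dom C f"
    and cod_add [simp]: "Cod C (f \<oplus> g) = Cod C f"
  using add_in_hom[OF assms] by (simp_all add: hom_def)

lemma neg_in_hom: "f \<in> Arr C \<Longrightarrow> Neg C f \<in> hom C (Dom C f) (Cod C f)"
  using hom_group_axioms(3)[of "Dom C f" "Cod C f"] by (simp add: hom_def)

lemma arr_neg [simp]: "f \<in> Arr C \<Longrightarrow> Neg C f \<in> Arr C"
  and dom_neg [simp]: "f \<in> Arr C \<Longrightarrow> Dom C (Neg C f) = Dom C f"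
  and cod_neg [simp]: "f \<in> Arr C \<Longrightarrow> Cod C (Neg C f) = Cod C f"
  using neg_in_hom by (simp_all add: hom_def)

lemma add_assoc [simp]:
  assumes "f \<in> Arr C" "g \<in> Arr C" "h \<in> Arr C" "Dom C g = Dom C f" "Cod C g = Cod C f"
    "Dom C h = Dom C f" "Cod C h = Cod C f"
  shows "(f \<oplus> g) \<oplus> h = f \<oplus> (g \<oplus> h)"
  using hom_group_axioms(4)[of "Dom C f" "Cod C f"] assms by (auto simp: hom_def)

lemma add_commute:
  assumes "f \<in> Arr C" "g \<in> Arr C" "Dom C g = Dom C f" "Cod C g = Cod C f"
  shows "f \<oplus> g = g \<oplus> f"
  using hom_group_axioms(5)[of "Dom C f" "Cod C f"] assms by (auto simp: hom_def)

lemma add_zer_right [simp]: "f \<in> Arr C \<Longrightarrow> Dom C f = X \<Longrightarrow> Cod C f = Y \<Longrightarrow> f \<oplus> Zer C X Y = f"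
  using hom_group_axioms(6)[of "Dom C f" "Cod C f"] by (auto simp: hom_def)

lemma add_zer_left [simp]: "f \<in> Arr C \<Longrightarrow> Dom C f = X \<Longrightarrow> Cod C f = Y \<Longrightarrow> Zer C X Y \<oplus> f = f"
  using add_zer_right add_commute by (metis arr_cod arr_dom arr_zer cod_zer dom_zer)

lemma diff_self [simp]: "f \<in> Arr C \<Longrightarrow> Dom C f = X \<Longrightarrow> Cod C f = Y \<Longrightarrow> f \<ominus> f = Zer C X Y"
  using hom_group_axioms(7)[of "Dom C f" "Cod C f"] by (auto simp: hom_def)

lemma neg_add_self [simp]: "f \<in> Arr C \<Longrightarrow> Dom C f = X \<Longrightarrow> Cod C f = Y \<Longrightarrow> Neg C f \<oplus> f = Zer C X Y"
  using diff_self add_commute by (metis arr_neg dom_neg cod_neg)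

lemma comp_add_right [simp]:
  assumes "f \<in> Arr C" "f' \<in> Arr C" "g \<in> Arr C" "Dom C f' = Dom C f" "Cod C f' = Cod C f"
    "Cod C f = Dom C g"
  shows "g \<cdot> (f \<oplus> f') = g \<cdot> f \<oplus> g \<cdot> f'"
proof -
  have "f \<in> hom C (Dom C f) (Cod C f)" "f' \<in> hom C (Dom C f) (Cod C f)"
    "g \<in> hom C (Cod C f) (Cod C g)" "Cod C g \<in> Obj C"
    using assms by (auto simp: hom_def)
  then show ?thesis using hom_group_axioms(8)[OF arr_dom[OF assms(1)] arr_cod[OF assms(1)]] by blast
qed

lemma comp_add_left [simp]:
  assumes "f \<in> Arr C" "g' \<in> Arr C" "g \<in> Arr C" "Dom C g' = Dom C g" "Cod C g' = Cod C g"
    "Cod C f = Dom C g"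
  shows "(g \<oplus> g') \<cdot> f = g \<cdot> f \<oplus> g' \<cdot> f"
proof -
  have "f \<in> hom C (Dom C f) (Cod C f)" "g \<in> hom C (Cod C f) (Cod C g)"
    "g' \<in> hom C (Cod C f) (Cod C g)" "Cod C g \<in> Obj C"
    using assms by (auto simp: hom_def)
  then show ?thesis using hom_group_axioms(9)[OF arr_dom[OF assms(1)] arr_cod[OF assms(1)]] by blast
qed

lemma neg_add_cancel_left [simp]: "a \<in> Arr C \<Longrightarrow> b \<in> Arr C \<Longrightarrow> Dom C b = Dom C a \<Longrightarrow> Cod C b = Cod C a
    \<Longrightarrow> Neg C a \<oplus> (a \<oplus> b) = b"
  using add_assoc[of "Neg C a" a b, symmetric] by simp

lemma add_neg_cancel_left [simp]: "a \<in> Arr C \<Longrightarrow> b \<in> Arr C \<Longrightarrow> Dom C b = Dom C a \<Longrightarrow> Cod C b = Cod C a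
    \<Longrightarrow> a \<oplus> (Neg C a \<oplus> b) = b"
  using add_assoc[of a "Neg C a" b, symmetric] by simp

lemma add_left_imp_eq:
  assumes "a \<in> Arr C" "b \<in> Arr C" "c \<in> Arr C" "Dom C b = Dom C a" "Cod C b = Cod C a"
    "Dom C c = Dom C a" "Cod C c = Cod C a" and "a \<oplus> b = a \<oplus> c"
  shows "b = c"
  using assms by (metis neg_add_cancel_left)

lemma add_left_commute:
  assumes "a \<in> Arr C" "b \<in> Arr C" "c \<in> Arr C" "Dom C b = Dom C a" "Cod C b = Cod C a"
    "Dom C c = Dom C a" "Cod C c = Cod C a"
  shows "a \<oplus> (b \<oplus> c) = b \<oplus> (a \<oplus> c)"
proof -
  have "a \<oplus> (b \<oplus> c) = (a \<oplus> b) \<oplus> c" using assms by simp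
  also have "a \<oplus> b = b \<oplus> a" using add_commute[of a b] assms by simp
  finally show ?thesis using assms by simp
qed

lemma comp_zer_right [simp]:
  assumes g: "g \<in> Arr C" "X \<in> Obj C" "Dom C g = Y" "Cod C g = Z"
  shows "g \<cdot> Zer C X Y = Zer C X Z"
proof -
  have "Y \<in> Obj C" "Z \<in> Obj C" using g by auto
  note g = g this
  have "g \<cdot> (Zer C X Y \<oplus> Zer C X Y) = g \<cdot> Zer C X Y \<oplus> g \<cdot> Zer C X Y"
    by (rule comp_add_right) (use g in auto)
  then have "g \<cdot> Zer C X Y \<oplus> g \<cdot> Zer C X Y = g \<cdot> Zer C X Y \<oplus> Zer C X Z"
    using g by simp
  then show ?thesis using add_left_imp_eq[of "g \<cdot> Zer C X Y" "g \<cdot> Zer C X Y" "Zer C X Z"] g by simp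
qed

lemma comp_zer_left [simp]:
  assumes g: "g \<in> Arr C" "Z \<in> Obj C" "Dom C g = X" "Cod C g = Y"
  shows "Zer C Y Z \<cdot> g = Zer C X Z"
proof -
  have "X \<in> Obj C" "Y \<in> Obj C" using g by auto
  note g = g this
  have "(Zer C Y Z \<oplus> Zer C Y Z) \<cdot> g = Zer C Y Z \<cdot> g \<oplus> Zer C Y Z \<cdot> g"
    by (rule comp_add_left) (use g in auto)
  then have "Zer C Y Z \<cdot> g \<oplus> Zer C Y Z \<cdot> g = Zer C Y Z \<cdot> g \<oplus> Zer C X Z"
    using g by simp
  then show ?thesis using add_left_imp_eq[of "Zer C Y Z \<cdot> g" "Zer C Y Z \<cdot> g" "Zer C X Z"] g by simp
qed

lemma neg_unique: "a \<in> Arr C \<Longrightarrow> b \<in> Arr C \<Longrightarrow> Dom C b = Dom C a \<Longrightarrow> Cod C b = Cod C a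
    \<Longrightarrow> a \<oplus> b = Zer C (Dom C a) (Cod C a) \<Longrightarrow> b = Neg C a"
  using add_left_imp_eq[of a b "Neg C a"] by simp

lemma eq_neg_if_add_eq_zer:
  assumes "a \<in> Arr C" "b \<in> Arr C" "Dom C b = Dom C a" "Cod C b = Cod C a"
    and "a \<oplus> b = Zer C (Dom C a) (Cod C a)"
  shows "a = Neg C b"
proof -
  have "b \<oplus> a = a \<oplus> b" using add_commute[of b a] assms by simp
  then show ?thesis using neg_unique[of b a] assms by simp
qed

lemma comp_neg_right [simp]:
  assumes "f \<in> Arr C" "g \<in> Arr C" "Cod C f = Dom C g"
  shows "g \<cdot> Neg C f = Neg C (g \<cdot> f)"
  using neg_unique[of "g \<cdot> f" "g \<cdot> Neg C f"] comp_add_right[of f "Neg C f" g] assms by simp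

lemma comp_neg_left [simp]:
  assumes "f \<in> Arr C" "g \<in> Arr C" "Cod C f = Dom C g"
  shows "Neg C g \<cdot> f = Neg C (g \<cdot> f)"
  using neg_unique[of "g \<cdot> f" "Neg C g \<cdot> f"] comp_add_left[of f "Neg C g" g] assms by simp

lemma diff_eq_zer_iff:
  assumes "f \<in> Arr C" "g \<in> Arr C" "Dom C g = Dom C f" "Cod C g = Cod C f"
  shows "f \<ominus> g = Zer C (Dom C f) (Cod C f) \<longleftrightarrow> f = g"
proof
  assume "f \<ominus> g = Zer C (Dom C f) (Cod C f)"
  then have "(f \<ominus> g) \<oplus> g = g" using assms by simp
  then show "f = g" using assms by simp
qed (use assms in simp)

lemma neg_neg [simp]: "f \<in> Arr C \<Longrightarrow> Neg C (Neg C f) = f"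
  using neg_unique[of "Neg C f" f] by simp

lemma neg_add [simp]:
  assumes "f \<in> Arr C" "g \<in> Arr C" "Dom C g = Dom C f" "Cod C g = Cod C f"
  shows "Neg C (f \<oplus> g) = Neg C f \<oplus> Neg C g"
proof -
  have "(f \<oplus> g) \<oplus> (Neg C g \<oplus> Neg C f) = Zer C (Dom C f) (Cod C f)" using assms by simp
  then have "Neg C g \<oplus> Neg C f = Neg C (f \<oplus> g)" using neg_unique[of "f \<oplus> g"] assms by simp
  then show ?thesis using add_commute[of "Neg C f" "Neg C g"] assms by simp
qed

lemma neg_zer [simp]: "X \<in> Obj C \<Longrightarrow> Y \<in> Obj C \<Longrightarrow> Neg C (Zer C X Y) = Zer C X Y"
  using neg_unique[of "Zer C X Y" "Zer C X Y"] by simp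


lemma monoI_zer:
  assumes m: "m \<in> Arr C"
    and zer: "\<And>a. a \<in> Arr C \<Longrightarrow> Cod C a = Dom C m \<Longrightarrow> m \<cdot> a = Zer C (Dom C a) (Cod C m) \<Longrightarrow>
      a = Zer C (Dom C a) (Dom C m)"
  shows "mono C m"
  unfolding mono_def
proof (intro conjI allI impI m)
  fix a b assume ab: "a \<in> Arr C" "b \<in> Arr C" "Dom C a = Dom C b" "Cod C a = Dom C m"
    "Cod C b = Dom C m" "m \<cdot> a = m \<cdot> b"
  have "m \<cdot> (a \<ominus> b) = Zer C (Dom C a) (Cod C m)" using ab m by simp
  then have "a \<ominus> b = Zer C (Dom C a) (Dom C m)" using zer[of "a \<ominus> b"] ab m by simp
  then show "a = b" using diff_eq_zer_iff[of a b] ab by simp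
qed

lemma epiI_zer:
  assumes e: "e \<in> Arr C"
    and zer: "\<And>a. a \<in> Arr C \<Longrightarrow> Dom C a = Cod C e \<Longrightarrow> a \<cdot> e = Zer C (Dom C e) (Cod C a) \<Longrightarrow>
      a = Zer C (Cod C e) (Cod C a)"
  shows "epi C e"
  unfolding epi_def
proof (intro conjI allI impI e)
  fix a b assume ab: "a \<in> Arr C" "b \<in> Arr C" "Cod C a = Cod C b" "Dom C a = Cod C e"
    "Dom C b = Cod C e" "a \<cdot> e = b \<cdot> e"
  have "(a \<ominus> b) \<cdot> e = Zer C (Dom C e) (Cod C a)" using ab e by simp
  then have "a \<ominus> b = Zer C (Cod C e) (Cod C a)" using zer[of "a \<ominus> b"] ab e by simp
  then show "a = b" using diff_eq_zer_iff[of a b] ab by simp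
qed

lemma mono_comp_eq_zer: "mono C m \<Longrightarrow> a \<in> Arr C \<Longrightarrow> Cod C a = Dom C m \<Longrightarrow>
    m \<cdot> a = Zer C (Dom C a) (Cod C m) \<Longrightarrow> a = Zer C (Dom C a) (Dom C m)"
  using monoD[of m a "Zer C (Dom C a) (Dom C m)"] mono_arr[of m] by simp

lemma epi_comp_eq_zer: "epi C e \<Longrightarrow> a \<in> Arr C \<Longrightarrow> Dom C a = Cod C e \<Longrightarrow>
    a \<cdot> e = Zer C (Dom C e) (Cod C a) \<Longrightarrow> a = Zer C (Cod C e) (Cod C a)"
  using epiD[of e a "Zer C (Cod C e) (Cod C a)"] epi_arr[of e] by simp

lemma kernelD: "is_kernel C f k \<Longrightarrow>
    f \<in> Arr C \<and> k \<in> Arr C \<and> Cod C k = Dom C f \<and> f \<cdot> k = Zer C (Dom C k) (Cod C f)"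
  unfolding is_kernel_def by blast

lemma cokernelD: "is_cokernel C f c \<Longrightarrow>
    f \<in> Arr C \<and> c \<in> Arr C \<and> Dom C c = Cod C f \<and> c \<cdot> f = Zer C (Dom C f) (Cod C c)"
  unfolding is_cokernel_def by blast

lemma kernel_factor: "is_kernel C f k \<Longrightarrow> g \<in> Arr C \<Longrightarrow> Cod C g = Dom C f \<Longrightarrow>
    f \<cdot> g = Zer C (Dom C g) (Cod C f) \<Longrightarrow>
    \<exists>u. u \<in> Arr C \<and> Dom C u = Dom C g \<and> Cod C u = Dom C k \<and> k \<cdot> u = g"
  unfolding is_kernel_def hom_def by blast

lemma cokernel_factor: "is_cokernel C f c \<Longrightarrow> g \<in> Arr C \<Longrightarrow> Dom C g = Cod C f \<Longrightarrow>
    g \<cdot> f = Zer C (Dom C f) (Cod C g) \<Longrightarrow>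
    \<exists>u. u \<in> Arr C \<and> Dom C u = Cod C c \<and> Cod C u = Cod C g \<and> u \<cdot> c = g"
  unfolding is_cokernel_def hom_def by blast

lemma kernel_mono:
  assumes k: "is_kernel C f k"
  shows "mono C k"
proof (rule monoI_zer)
  show "k \<in> Arr C" using kernelD[OF k] by blast
next
  fix a assume a: "a \<in> Arr C" "Cod C a = Dom C k" "k \<cdot> a = Zer C (Dom C a) (Cod C k)"
  have kk: "f \<in> Arr C" "k \<in> Arr C" "Cod C k = Dom C f" using kernelD[OF k] by auto
  let ?z = "Zer C (Dom C a) (Cod C k)"
  have "?z \<in> Arr C" "Cod C ?z = Dom C f" "f \<cdot> ?z = Zer C (Dom C ?z) (Cod C f)" using a kk by auto
  then have "\<exists>!u. u \<in> hom C (Dom C ?z) (Dom C k) \<and> k \<cdot> u = ?z"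
    using k unfolding is_kernel_def by blast
  moreover have "a \<in> hom C (Dom C ?z) (Dom C k) \<and> k \<cdot> a = ?z" using a kk by (auto simp: hom_def)
  moreover have "Zer C (Dom C a) (Dom C k) \<in> hom C (Dom C ?z) (Dom C k)
      \<and> k \<cdot> Zer C (Dom C a) (Dom C k) = ?z"
    using a kk by (auto simp: hom_def)
  ultimately show "a = Zer C (Dom C a) (Dom C k)" by blast
qed

lemma cokernel_epi:
  assumes c: "is_cokernel C f c"
  shows "epi C c"
proof (rule epiI_zer)
  show "c \<in> Arr C" using cokernelD[OF c] by blast
next
  fix a assume a: "a \<in> Arr C" "Dom C a = Cod C c" "a \<cdot> c = Zer C (Dom C c) (Cod C a)"
  have cc: "f \<in> Arr C" "c \<in> Arr C" "Dom C c = Cod C f" using cokernelD[OF c] by auto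
  let ?z = "Zer C (Dom C c) (Cod C a)"
  have "?z \<in> Arr C" "Dom C ?z = Cod C f" "?z \<cdot> f = Zer C (Dom C f) (Cod C ?z)" using a cc by auto
  then have "\<exists>!u. u \<in> hom C (Cod C c) (Cod C ?z) \<and> u \<cdot> c = ?z"
    using c unfolding is_cokernel_def by blast
  moreover have "a \<in> hom C (Cod C c) (Cod C ?z) \<and> a \<cdot> c = ?z" using a cc by (auto simp: hom_def)
  moreover have "Zer C (Cod C c) (Cod C a) \<in> hom C (Cod C c) (Cod C ?z)
      \<and> Zer C (Cod C c) (Cod C a) \<cdot> c = ?z"
    using a cc by (auto simp: hom_def)
  ultimately show "a = Zer C (Cod C c) (Cod C a)" by blast
qed

lemma is_kernelI:
  assumes "f \<in> Arr C" "k \<in> Arr C" and k: "mono C k" and "Cod C k = Dom C f"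
    "f \<cdot> k = Zer C (Dom C k) (Cod C f)"
    and factor: "\<And>g. g \<in> Arr C \<Longrightarrow> Cod C g = Dom C f \<Longrightarrow> f \<cdot> g = Zer C (Dom C g) (Cod C f) \<Longrightarrow>
      \<exists>u. u \<in> Arr C \<and> Dom C u = Dom C g \<and> Cod C u = Dom C k \<and> k \<cdot> u = g"
  shows "is_kernel C f k"
  unfolding is_kernel_def
proof (intro conjI assms ballI impI)
  fix g assume g: "g \<in> Arr C" "Cod C g = Dom C f" "f \<cdot> g = Zer C (Dom C g) (Cod C f)"
  obtain u where u: "u \<in> Arr C" "Dom C u = Dom C g" "Cod C u = Dom C k" "k \<cdot> u = g"
    using factor[OF g] by blast
  show "\<exists>!u. u \<in> hom C (Dom C g) (Dom C k) \<and> k \<cdot> u = g"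
  proof (rule ex1I[of _ u])
    fix v assume "v \<in> hom C (Dom C g) (Dom C k) \<and> k \<cdot> v = g"
    then show "v = u" using monoD[OF k, of v u] u by (auto simp: hom_def)
  qed (use u in \<open>auto simp: hom_def\<close>)
qed

lemma is_cokernelI:
  assumes "f \<in> Arr C" "c \<in> Arr C" and c: "epi C c" and "Dom C c = Cod C f"
    "c \<cdot> f = Zer C (Dom C f) (Cod C c)"
    and factor: "\<And>g. g \<in> Arr C \<Longrightarrow> Dom C g = Cod C f \<Longrightarrow> g \<cdot> f = Zer C (Dom C f) (Cod C g) \<Longrightarrow>
      \<exists>u. u \<in> Arr C \<and> Dom C u = Cod C c \<and> Cod C u = Cod C g \<and> u \<cdot> c = g"
  shows "is_cokernel C f c"
  unfolding is_cokernel_def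
proof (intro conjI assms ballI impI)
  fix g assume g: "g \<in> Arr C" "Dom C g = Cod C f" "g \<cdot> f = Zer C (Dom C f) (Cod C g)"
  obtain u where u: "u \<in> Arr C" "Dom C u = Cod C c" "Cod C u = Cod C g" "u \<cdot> c = g"
    using factor[OF g] by blast
  show "\<exists>!u. u \<in> hom C (Cod C c) (Cod C g) \<and> u \<cdot> c = g"
  proof (rule ex1I[of _ u])
    fix v assume "v \<in> hom C (Cod C c) (Cod C g) \<and> v \<cdot> c = g"
    then show "v = u" using epiD[OF c, of v u] u by (auto simp: hom_def)
  qed (use u in \<open>auto simp: hom_def\<close>)
qed

lemma kernel_cancel_mono:
  assumes j: "mono C j" and k': "is_kernel C (j \<cdot> u) k'" and u: "u \<in> Arr C" "Cod C u = Dom C j"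
  shows "is_kernel C u k'"
proof -
  have jj: "j \<in> Arr C" using mono_arr[OF j] .
  have kk: "k' \<in> Arr C" "Cod C k' = Dom C u" "(j \<cdot> u) \<cdot> k' = Zer C (Dom C k') (Cod C j)"
    using kernelD[OF k'] jj u by auto
  show ?thesis
  proof (rule is_kernelI)
    show "u \<cdot> k' = Zer C (Dom C k') (Cod C u)"
      using mono_comp_eq_zer[OF j, of "u \<cdot> k'"] kk jj u by simp
  next
    fix \<phi> assume \<phi>: "\<phi> \<in> Arr C" "Cod C \<phi> = Dom C u" "u \<cdot> \<phi> = Zer C (Dom C \<phi>) (Cod C u)"
    then have "(j \<cdot> u) \<cdot> \<phi> = Zer C (Dom C \<phi>) (Cod C (j \<cdot> u))" using jj u by simp
    then show "\<exists>v. v \<in> Arr C \<and> Dom C v = Dom C \<phi> \<and> Cod C v = Dom C k' \<and> k' \<cdot> v = \<phi>"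
      using kernel_factor[OF k', of \<phi>] \<phi> jj u by auto
  qed (use kernel_mono[OF k'] kk u in simp_all)
qed

lemma split_mono_if_retraction:
  assumes k: "is_kernel C c \<mu>" and "retraction C c"
  shows "split_mono C \<mu>"
proof -
  have kk: "c \<in> Arr C" "\<mu> \<in> Arr C" "Cod C \<mu> = Dom C c" "c \<cdot> \<mu> = Zer C (Dom C \<mu>) (Cod C c)"
    using kernelD[OF k] by auto
  obtain s where s: "s \<in> Arr C" "Dom C s = Cod C c" "Cod C s = Dom C c" "c \<cdot> s = Idn C (Cod C c)"
    using assms(2) unfolding retraction_def hom_def by blast
  have "c \<cdot> (s \<cdot> c) = c" using comp_assoc_eq[OF s(4) kk(1) s(1) kk(1)] s kk by simp
  then have "c \<cdot> (Idn C (Dom C c) \<ominus> s \<cdot> c) = Zer C (Dom C c) (Cod C c)" using s kk by simp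
  then obtain r where r: "r \<in> Arr C" "Dom C r = Dom C c" "Cod C r = Dom C \<mu>"
      "\<mu> \<cdot> r = Idn C (Dom C c) \<ominus> s \<cdot> c"
    using kernel_factor[OF k, of "Idn C (Dom C c) \<ominus> s \<cdot> c"] s kk by auto
  have "\<mu> \<cdot> (r \<cdot> \<mu>) = (Idn C (Dom C c) \<ominus> s \<cdot> c) \<cdot> \<mu>"
    using comp_assoc_eq[OF r(4) kk(2) r(1) kk(2)] r kk by simp
  also have "\<dots> = \<mu> \<cdot> Idn C (Dom C \<mu>)" using s kk by simp
  finally have "r \<cdot> \<mu> = Idn C (Dom C \<mu>)"
    using monoD[OF kernel_mono[OF k], of "r \<cdot> \<mu>" "Idn C (Dom C \<mu>)"] r kk by simp
  then show ?thesis unfolding split_mono_def using r kk by (auto simp: hom_def)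
qed

lemma biproductD:
  assumes "is_biproduct C X Y P i1 i2 p1 p2"
  shows "P \<in> Obj C" "i1 \<in> Arr C" "i2 \<in> Arr C" "p1 \<in> Arr C" "p2 \<in> Arr C"
    "Dom C i1 = X" "Cod C i1 = P" "Dom C i2 = Y" "Cod C i2 = P"
    "Dom C p1 = P" "Cod C p1 = X" "Dom C p2 = P" "Cod C p2 = Y"
    "p1 \<cdot> i1 = Idn C X" "p2 \<cdot> i2 = Idn C Y" "p2 \<cdot> i1 = Zer C X Y" "p1 \<cdot> i2 = Zer C Y X"
    "i1 \<cdot> p1 \<oplus> i2 \<cdot> p2 = Idn C P"
  using assms unfolding is_biproduct_def hom_def by blast+

lemma biproduct_proj_inj:
  assumes B: "is_biproduct C X Y P i1 i2 p1 p2" and x: "x \<in> Arr C"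
  shows "Cod C x = X \<Longrightarrow> p1 \<cdot> (i1 \<cdot> x) = x" and "Cod C x = X \<Longrightarrow> p2 \<cdot> (i1 \<cdot> x) = Zer C (Dom C x) Y"
    and "Cod C x = Y \<Longrightarrow> p1 \<cdot> (i2 \<cdot> x) = Zer C (Dom C x) X" and "Cod C x = Y \<Longrightarrow> p2 \<cdot> (i2 \<cdot> x) = x"
  using biproductD[OF B] x comp_assoc[of x i1 p1] comp_assoc[of x i1 p2] comp_assoc[of x i2 p1]
    comp_assoc[of x i2 p2] arr_dom[of p1] arr_dom[of p2] arr_cod[of p1] arr_cod[of p2]
  by auto

lemma copair_comp_inj:
  assumes B: "is_biproduct C (Dom C u) (Dom C v) P i1 i2 p1 p2"
    and uv: "u \<in> Arr C" "v \<in> Arr C" "Cod C v = Cod C u"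
  shows "(u \<cdot> p1 \<oplus> v \<cdot> p2) \<cdot> i1 = u" and "(u \<cdot> p1 \<oplus> v \<cdot> p2) \<cdot> i2 = v"
  using biproductD[OF B] uv by simp_all

end

definition jointly_epi :: "('o, 'm) cat \<Rightarrow> 'm \<Rightarrow> 'm \<Rightarrow> bool" where
  "jointly_epi C u v \<longleftrightarrow> (\<forall>\<psi>\<in>Arr C. Dom C \<psi> = Cod C u \<longrightarrow>
     Cmp C \<psi> u = Zer C (Dom C u) (Cod C \<psi>) \<longrightarrow> Cmp C \<psi> v = Zer C (Dom C v) (Cod C \<psi>) \<longrightarrow>
     \<psi> = Zer C (Cod C u) (Cod C \<psi>))"

lemma jointly_epiD:
  assumes "jointly_epi C u v" "\<psi> \<in> Arr C" "Dom C \<psi> = Cod C u"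
    "Cmp C \<psi> u = Zer C (Dom C u) (Cod C \<psi>)" "Cmp C \<psi> v = Zer C (Dom C v) (Cod C \<psi>)"
  shows "\<psi> = Zer C (Cod C u) (Cod C \<psi>)"
  using assms unfolding jointly_epi_def by blast

context is_preadditive
begin

lemma epi_copair_iff_jointly_epi:
  assumes B: "is_biproduct C (Dom C u) (Dom C v) P i1 i2 p1 p2"
    and uv: "u \<in> Arr C" "v \<in> Arr C" "Cod C v = Cod C u"
  shows "epi C (u \<cdot> p1 \<oplus> v \<cdot> p2) \<longleftrightarrow> jointly_epi C u v"
proof
  let ?\<sigma> = "u \<cdot> p1 \<oplus> v \<cdot> p2"
  note bp = biproductD[OF B]
  have \<sigma>: "?\<sigma> \<in> Arr C" "Dom C ?\<sigma> = P" "Cod C ?\<sigma> = Cod C u" using bp uv by simp_all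
  note inj = copair_comp_inj[OF B uv]
  show "jointly_epi C u v" if epi: "epi C ?\<sigma>"
    unfolding jointly_epi_def
  proof (intro ballI impI)
    fix \<psi> assume \<psi>: "\<psi> \<in> Arr C" "Dom C \<psi> = Cod C u"
      "\<psi> \<cdot> u = Zer C (Dom C u) (Cod C \<psi>)" "\<psi> \<cdot> v = Zer C (Dom C v) (Cod C \<psi>)"
    have "\<psi> \<cdot> ?\<sigma> = Zer C P (Cod C \<psi>)"
      using comp_assoc_eq[OF \<psi>(3) \<psi>(1) uv(1) bp(4)] comp_assoc_eq[OF \<psi>(4) \<psi>(1) uv(2) bp(5)]
        \<psi> bp uv by simp
    then show "\<psi> = Zer C (Cod C u) (Cod C \<psi>)"
      using epi_comp_eq_zer[OF epi \<psi>(1)] \<psi> \<sigma> by simp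
  qed
  show "epi C ?\<sigma>" if je: "jointly_epi C u v"
  proof (rule epiI_zer[OF \<sigma>(1)])
    fix \<psi> assume \<psi>: "\<psi> \<in> Arr C" "Dom C \<psi> = Cod C ?\<sigma>" "\<psi> \<cdot> ?\<sigma> = Zer C (Dom C ?\<sigma>) (Cod C \<psi>)"
    have "\<psi> \<cdot> u = (\<psi> \<cdot> ?\<sigma>) \<cdot> i1" using \<psi>(1,2) \<sigma> bp by (simp add: inj)
    also have "\<dots> = Zer C (Dom C u) (Cod C \<psi>)" by (subst \<psi>(3)) (use \<psi> \<sigma> bp in simp)
    finally have u0: "\<psi> \<cdot> u = Zer C (Dom C u) (Cod C \<psi>)" .
    have "\<psi> \<cdot> v = (\<psi> \<cdot> ?\<sigma>) \<cdot> i2" using \<psi>(1,2) \<sigma> bp by (simp add: inj)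
    also have "\<dots> = Zer C (Dom C v) (Cod C \<psi>)" by (subst \<psi>(3)) (use \<psi> \<sigma> bp in simp)
    finally show "\<psi> = Zer C (Cod C ?\<sigma>) (Cod C \<psi>)"
      using je u0 \<psi> \<sigma> bp uv unfolding jointly_epi_def by simp
  qed
qed

lemma jointly_epi_if_cokernel_comp_epi:
  assumes c: "is_cokernel C f c" and ct: "epi C (c \<cdot> t)" and t: "t \<in> Arr C" "Cod C t = Cod C f"
  shows "jointly_epi C f t"
  unfolding jointly_epi_def
proof (intro ballI impI)
  fix \<psi> assume \<psi>: "\<psi> \<in> Arr C" "Dom C \<psi> = Cod C f" "\<psi> \<cdot> f = Zer C (Dom C f) (Cod C \<psi>)"
    "\<psi> \<cdot> t = Zer C (Dom C t) (Cod C \<psi>)"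
  obtain \<rho> where \<rho>: "\<rho> \<in> Arr C" "Dom C \<rho> = Cod C c" "Cod C \<rho> = Cod C \<psi>" "\<rho> \<cdot> c = \<psi>"
    using cokernel_factor[OF c \<psi>(1-3)] by blast
  have cc: "c \<in> Arr C" "Dom C c = Cod C f" using cokernelD[OF c] by auto
  have "\<rho> \<cdot> (c \<cdot> t) = Zer C (Dom C t) (Cod C \<rho>)"
    using comp_assoc_eq[OF \<rho>(4) \<rho>(1) cc(1) t(1)] \<psi> \<rho> cc t by simp
  then have "\<rho> = Zer C (Cod C c) (Cod C \<rho>)"
    using epi_comp_eq_zer[OF ct \<rho>(1)] \<rho> cc t by simp
  then show "\<psi> = Zer C (Cod C f) (Cod C \<psi>)" using \<rho> cc \<psi> by auto
qed

end

locale is_abelian =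
  fixes C :: "('o, 'm) cat"
  assumes abelian: "abelian C"

sublocale is_abelian \<subseteq> is_preadditive
  using abelian by unfold_locales (simp add: abelian_def)

context is_abelian
begin

lemma kernel_exists: "f \<in> Arr C \<Longrightarrow> \<exists>k. is_kernel C f k"
  and cokernel_exists: "f \<in> Arr C \<Longrightarrow> \<exists>c. is_cokernel C f c"
  using abelian unfolding abelian_def by blast+

lemma biproduct_exists: "X \<in> Obj C \<Longrightarrow> Y \<in> Obj C \<Longrightarrow> \<exists>P i1 i2 p1 p2. is_biproduct C X Y P i1 i2 p1 p2"
  using abelian unfolding abelian_def by blast

lemma kernel_of_cokernel_if_mono:
  assumes m: "mono C m" and c: "is_cokernel C m c"
  shows "is_kernel C c m"
proof -
  obtain h where h: "is_kernel C h m" using abelian m unfolding abelian_def by blast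
  have hh: "h \<in> Arr C" "Cod C m = Dom C h" "h \<cdot> m = Zer C (Dom C m) (Cod C h)"
    using kernelD[OF h] by auto
  have cc: "c \<in> Arr C" "m \<in> Arr C" "Dom C c = Cod C m" "c \<cdot> m = Zer C (Dom C m) (Cod C c)"
    using cokernelD[OF c] by auto
  obtain l where l: "l \<in> Arr C" "Dom C l = Cod C c" "Cod C l = Cod C h" "l \<cdot> c = h"
    using cokernel_factor[OF c, of h] hh by auto
  show ?thesis
  proof (rule is_kernelI)
    fix g assume g: "g \<in> Arr C" "Cod C g = Dom C c" "c \<cdot> g = Zer C (Dom C g) (Cod C c)"
    have "h \<cdot> g = Zer C (Dom C g) (Cod C h)"
      using comp_assoc_eq[OF l(4) l(1) cc(1) g(1)] g l cc by simp
    then show "\<exists>u. u \<in> Arr C \<and> Dom C u = Dom C g \<and> Cod C u = Dom C m \<and> m \<cdot> u = g"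
      using kernel_factor[OF h, of g] g hh cc by auto
  qed (use m cc in auto)
qed

lemma cokernel_of_kernel_if_epi:
  assumes e: "epi C e" and k: "is_kernel C e k"
  shows "is_cokernel C k e"
proof -
  obtain h where h: "is_cokernel C h e" using abelian e unfolding abelian_def by blast
  have hh: "h \<in> Arr C" "Dom C e = Cod C h" "e \<cdot> h = Zer C (Dom C h) (Cod C e)"
    using cokernelD[OF h] by auto
  have kk: "k \<in> Arr C" "e \<in> Arr C" "Cod C k = Dom C e" "e \<cdot> k = Zer C (Dom C k) (Cod C e)"
    using kernelD[OF k] by auto
  obtain l where l: "l \<in> Arr C" "Cod C l = Dom C k" "Dom C l = Dom C h" "k \<cdot> l = h"
    using kernel_factor[OF k, of h] hh by auto
  show ?thesis
  proof (rule is_cokernelI)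
    fix g assume g: "g \<in> Arr C" "Dom C g = Cod C k" "g \<cdot> k = Zer C (Dom C k) (Cod C g)"
    have "g \<cdot> h = Zer C (Dom C h) (Cod C g)"
      using comp_assoc_eq[OF g(3) g(1) kk(1) l(1)] g l kk by (simp add: l(4))
    then show "\<exists>u. u \<in> Arr C \<and> Dom C u = Cod C e \<and> Cod C u = Cod C g \<and> u \<cdot> e = g"
      using cokernel_factor[OF h, of g] g hh kk by auto
  qed (use e kk in auto)
qed

lemma retraction_iff_split_mono_kernel:
  assumes ce: "epi C c" and k: "is_kernel C c \<mu>"
  shows "retraction C c \<longleftrightarrow> split_mono C \<mu>"
proof
  assume "split_mono C \<mu>"
  then obtain r where r: "r \<in> Arr C" "Dom C r = Cod C \<mu>" "Cod C r = Dom C \<mu>" "r \<cdot> \<mu> = Idn C (Dom C \<mu>)"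
    unfolding split_mono_def hom_def by blast
  have kk: "c \<in> Arr C" "\<mu> \<in> Arr C" "Cod C \<mu> = Dom C c" "c \<cdot> \<mu> = Zer C (Dom C \<mu>) (Cod C c)"
    using kernelD[OF k] by auto
  have "\<mu> \<cdot> (r \<cdot> \<mu>) = \<mu>" using r kk by simp
  then have "(Idn C (Dom C c) \<ominus> \<mu> \<cdot> r) \<cdot> \<mu> = Zer C (Dom C \<mu>) (Dom C c)" using r kk by simp
  then obtain s where s: "s \<in> Arr C" "Dom C s = Cod C c" "Cod C s = Dom C c"
      "s \<cdot> c = Idn C (Dom C c) \<ominus> \<mu> \<cdot> r"
    using cokernel_factor[OF cokernel_of_kernel_if_epi[OF ce k], of "Idn C (Dom C c) \<ominus> \<mu> \<cdot> r"] r kk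
    by auto
  have "c \<cdot> (\<mu> \<cdot> r) = Zer C (Dom C c) (Cod C c)"
    using comp_assoc_eq[OF kk(4) kk(1) kk(2) r(1)] r kk by simp
  then have "(c \<cdot> s) \<cdot> c = Idn C (Cod C c) \<cdot> c" using s kk r by simp
  then have "c \<cdot> s = Idn C (Cod C c)" using epiD[OF ce, of "c \<cdot> s" "Idn C (Cod C c)"] s kk by simp
  then show "retraction C c" unfolding retraction_def using s by (auto simp: hom_def)
qed (rule split_mono_if_retraction[OF k])

lemma epi_factor_through_image:
  assumes c: "is_cokernel C \<phi> c" and j: "is_kernel C c j"
    and e: "e \<in> Arr C" "Dom C e = Dom C \<phi>" "Cod C e = Dom C j" "j \<cdot> e = \<phi>"
  shows "epi C e"
proof (rule epiI_zer[OF e(1)])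
  have cc: "c \<in> Arr C" "Dom C c = Cod C \<phi>" using cokernelD[OF c] by auto
  have jj: "j \<in> Arr C" "Cod C j = Dom C c" "c \<cdot> j = Zer C (Dom C j) (Cod C c)"
    using kernelD[OF j] by auto
  fix x assume x: "x \<in> Arr C" "Dom C x = Cod C e" "x \<cdot> e = Zer C (Dom C e) (Cod C x)"
  obtain n where n: "is_kernel C x n" using kernel_exists[OF x(1)] by blast
  have nn: "n \<in> Arr C" "Cod C n = Dom C x" "x \<cdot> n = Zer C (Dom C n) (Cod C x)"
    using kernelD[OF n] by auto
  obtain e' where e': "e' \<in> Arr C" "Dom C e' = Dom C e" "Cod C e' = Dom C n" "n \<cdot> e' = e"
    using kernel_factor[OF n, of e] x e by auto
  have jn: "mono C (j \<cdot> n)" using mono_comp[OF kernel_mono[OF j] kernel_mono[OF n]] nn x e by simp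
  obtain d where d: "is_cokernel C (j \<cdot> n) d" using cokernel_exists[of "j \<cdot> n"] nn jj x e by auto
  have dd: "d \<in> Arr C" "Dom C d = Cod C j" using cokernelD[OF d] nn jj x e by auto
  \<comment> \<open>\<open>\<phi>\<close> factors through the subobject \<open>j \<cdot> n\<close> of the image, which therefore is the whole image\<close>
  have "(d \<cdot> (j \<cdot> n)) \<cdot> e' = d \<cdot> (j \<cdot> (n \<cdot> e'))" using dd nn jj x e e' by simp
  then have "d \<cdot> \<phi> = Zer C (Dom C \<phi>) (Cod C d)" using cokernelD[OF d] dd nn jj x e e' by simp
  then obtain l where l: "l \<in> Arr C" "Dom C l = Cod C c" "Cod C l = Cod C d" "l \<cdot> c = d"
    using cokernel_factor[OF c, of d] dd e jj cc by auto
  have "d \<cdot> j = Zer C (Dom C j) (Cod C d)"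
    using comp_assoc_eq[OF l(4) l(1) cc(1) jj(1)] l cc jj by simp
  then obtain w where w: "w \<in> Arr C" "Dom C w = Dom C j" "Cod C w = Dom C (j \<cdot> n)" "(j \<cdot> n) \<cdot> w = j"
    using kernel_factor[OF kernel_of_cokernel_if_mono[OF jn d], of j] jj dd by auto
  have "j \<cdot> (n \<cdot> w) = j \<cdot> Idn C (Dom C j)" using w nn jj x e by simp
  then have nw: "n \<cdot> w = Idn C (Dom C j)"
    using monoD[OF kernel_mono[OF j], of "n \<cdot> w" "Idn C (Dom C j)"] w nn jj x e by simp
  have "x = (x \<cdot> n) \<cdot> w" using nw w nn(1,2) jj x(1,2) e by simp
  then show "x = Zer C (Cod C e) (Cod C x)" using w nn jj x e by simp
qed

lemma image_factorization_exists:
  assumes \<phi>: "\<phi> \<in> Arr C"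
  shows "\<exists>e j. is_image_fact C \<phi> e j"
proof -
  obtain c where c: "is_cokernel C \<phi> c" using cokernel_exists[OF \<phi>] by blast
  have cc: "c \<in> Arr C" "Dom C c = Cod C \<phi>" "c \<cdot> \<phi> = Zer C (Dom C \<phi>) (Cod C c)"
    using cokernelD[OF c] by auto
  obtain j where j: "is_kernel C c j" using kernel_exists[OF cc(1)] by blast
  have jj: "j \<in> Arr C" "Cod C j = Dom C c" using kernelD[OF j] by auto
  obtain e where e: "e \<in> Arr C" "Dom C e = Dom C \<phi>" "Cod C e = Dom C j" "j \<cdot> e = \<phi>"
    using kernel_factor[OF j, of \<phi>] \<phi> cc by auto
  then have "is_image_fact C \<phi> e j"
    unfolding is_image_fact_def using \<phi> kernel_mono[OF j] epi_factor_through_image[OF c j e] jj cc by simp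
  then show ?thesis by blast
qed

lemma image_factD:
  assumes "is_image_fact C \<phi> e j"
  shows "\<phi> \<in> Arr C" "epi C e" "mono C j" "e \<in> Arr C" "j \<in> Arr C"
    "Dom C e = Dom C \<phi>" "Cod C j = Cod C \<phi>" "Cod C e = Dom C j" "j \<cdot> e = \<phi>"
  using assms unfolding is_image_fact_def using epi_arr mono_arr by blast+

lemma proper_sum_iff_not_jointly_epi:
  assumes uv: "u \<in> Arr C" "v \<in> Arr C" "Cod C v = Cod C u"
  shows "proper_sum C u v \<longleftrightarrow> \<not> jointly_epi C u v"
proof
  assume proper: "proper_sum C u v"
  obtain P i1 i2 p1 p2 where B: "is_biproduct C (Dom C u) (Dom C v) P i1 i2 p1 p2"
    using biproduct_exists[of "Dom C u" "Dom C v"] uv by auto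
  let ?\<sigma> = "u \<cdot> p1 \<oplus> v \<cdot> p2"
  have \<sigma>: "?\<sigma> \<in> Arr C" "Cod C ?\<sigma> = Cod C u" using biproductD[OF B] uv by simp_all
  have no_iso: "\<not> iso C j" if "is_image_fact C ?\<sigma> e j" for e j
    using proper B that unfolding proper_sum_def by blast
  show "\<not> jointly_epi C u v"
  proof
    assume "jointly_epi C u v"
    then have "is_image_fact C ?\<sigma> ?\<sigma> (Idn C (Cod C u))"
      unfolding is_image_fact_def
      using epi_copair_iff_jointly_epi[OF B uv] \<sigma> mono_idn uv by simp
    then show False using no_iso iso_idn[OF arr_cod[OF uv(1)]] by blast
  qed
next
  assume "\<not> jointly_epi C u v"
  show "proper_sum C u v"
    unfolding proper_sum_def
  proof (intro allI impI notI)
    fix P i1 i2 p1 p2 e j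
    assume B: "is_biproduct C (Dom C u) (Dom C v) P i1 i2 p1 p2"
      and ej: "is_image_fact C (u \<cdot> p1 \<oplus> v \<cdot> p2) e j" and j: "iso C j"
    have "epi C (j \<cdot> e)"
      by (rule epi_comp[OF iso_epi[OF j]]) (use image_factD[OF ej] in simp_all)
    then show False
      using \<open>\<not> jointly_epi C u v\<close> epi_copair_iff_jointly_epi[OF B uv] image_factD[OF ej] by simp
  qed
qed

lemma jointly_epi_if_comp_epi:
  assumes u: "epi C u" and k': "is_kernel C u k'" and u\<mu>: "epi C (u \<cdot> \<mu>)"
    and \<mu>: "\<mu> \<in> Arr C" "Cod C \<mu> = Dom C u"
  shows "jointly_epi C \<mu> k'"
  unfolding jointly_epi_def
proof (intro ballI impI)
  have uu: "u \<in> Arr C" "k' \<in> Arr C" "Cod C k' = Dom C u" using kernelD[OF k'] by auto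
  fix \<psi> assume \<psi>: "\<psi> \<in> Arr C" "Dom C \<psi> = Cod C \<mu>" "\<psi> \<cdot> \<mu> = Zer C (Dom C \<mu>) (Cod C \<psi>)"
    "\<psi> \<cdot> k' = Zer C (Dom C k') (Cod C \<psi>)"
  obtain \<rho> where \<rho>: "\<rho> \<in> Arr C" "Dom C \<rho> = Cod C u" "Cod C \<rho> = Cod C \<psi>" "\<rho> \<cdot> u = \<psi>"
    using cokernel_factor[OF cokernel_of_kernel_if_epi[OF u k'], of \<psi>] \<psi> \<mu> uu by auto
  have "\<rho> \<cdot> (u \<cdot> \<mu>) = Zer C (Dom C \<mu>) (Cod C \<rho>)"
    using comp_assoc_eq[OF \<rho>(4) \<rho>(1) uu(1) \<mu>(1)] \<rho> \<psi> \<mu> uu by simp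
  then have "\<rho> = Zer C (Cod C u) (Cod C \<rho>)" using epi_comp_eq_zer[OF u\<mu> \<rho>(1)] \<rho> \<mu> uu by simp
  then show "\<psi> = Zer C (Cod C \<mu>) (Cod C \<psi>)" using \<rho> \<mu> uu \<psi>(1,2) by auto
qed

end

text \<open>In the notation of the paper: the canonical epimorphism \<open>K \<rightarrow> h(K)\<close> factors through \<open>k\<close>.\<close>

definition image_epi_extends :: "('o, 'm) cat \<Rightarrow> 'm \<Rightarrow> 'm \<Rightarrow> bool" where
  "image_epi_extends C k h \<longleftrightarrow> (\<exists>e j. is_image_fact C (Cmp C h k) e j
     \<and> (\<exists>u\<in>hom C (Cod C k) (Cod C e). Cmp C u k = e))"

lemma (in is_abelian) no_coinciding_iff:
  assumes "\<mu> \<in> Arr C" "h \<in> Arr C" "Cod C \<mu> = Dom C h"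
  shows "no_coinciding C \<mu> h \<longleftrightarrow> \<not> image_epi_extends C \<mu> h"
proof -
  have "(\<exists>u\<in>hom C (Cod C \<mu>) (Dom C j). j \<cdot> (u \<cdot> \<mu>) = h \<cdot> \<mu>)
      \<longleftrightarrow> (\<exists>u\<in>hom C (Cod C \<mu>) (Cod C e). u \<cdot> \<mu> = e)"
    if ej: "is_image_fact C (h \<cdot> \<mu>) e j" for e j
  proof -
    note im = image_factD[OF ej]
    have "j \<cdot> (u \<cdot> \<mu>) = h \<cdot> \<mu> \<longleftrightarrow> u \<cdot> \<mu> = e" if u: "u \<in> hom C (Cod C \<mu>) (Dom C j)" for u
      using monoD[OF im(3), of "u \<cdot> \<mu>" e] u im assms by (auto simp: hom_def)
    then show ?thesis using im(8) by auto
  qed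
  then show ?thesis unfolding no_coinciding_def image_epi_extends_def by blast
qed

section \<open>The stable category\<close>

locale stable_category = is_abelian C for C :: "('o, 'm) cat" +
  fixes T :: "'o set"
  assumes proj_subcat: "proj_subcat C T"
begin

abbreviation stably_zero :: "'m \<Rightarrow> bool" where "stably_zero f \<equiv> factors_T C T f"

lemma T_obj: "X \<in> T \<Longrightarrow> X \<in> Obj C"
  using proj_subcat unfolding proj_subcat_def by blast

lemma T_biproduct: "X \<in> T \<Longrightarrow> Y \<in> T \<Longrightarrow> is_biproduct C X Y P i1 i2 p1 p2 \<Longrightarrow> P \<in> T"
  using proj_subcat unfolding proj_subcat_def by blast

lemma zero_object_in_T: "\<exists>Z. Z \<in> T"
proof -
  obtain Z where "zero_obj C Z" using abelian unfolding abelian_def by blast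
  then have "Z \<in> T" using proj_subcat unfolding proj_subcat_def by blast
  then show ?thesis ..
qed

lemma T_lift:
  assumes "P \<in> T" "epi C e" "b \<in> Arr C" "Dom C b = P" "Cod C b = Cod C e"
  shows "\<exists>b'. b' \<in> Arr C \<and> Dom C b' = P \<and> Cod C b' = Dom C e \<and> e \<cdot> b' = b"
proof -
  have "projective C P" using proj_subcat assms(1) unfolding proj_subcat_def by blast
  then show ?thesis using assms unfolding projective_def hom_def by blast
qed

lemma stably_zeroI: "T0 \<in> T \<Longrightarrow> a \<in> Arr C \<Longrightarrow> b \<in> Arr C \<Longrightarrow> Cod C a = T0 \<Longrightarrow> Dom C b = T0 \<Longrightarrow>
    stably_zero (b \<cdot> a)"
  unfolding factors_T_def hom_def by auto

lemma stably_zeroE: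
  assumes "stably_zero f"
  obtains T0 a b where "T0 \<in> T" "a \<in> Arr C" "b \<in> Arr C" "Dom C a = Dom C f" "Cod C a = T0"
    "Dom C b = T0" "Cod C b = Cod C f" "b \<cdot> a = f"
  using assms unfolding factors_T_def hom_def by auto

lemma stably_zero_arr: "stably_zero f \<Longrightarrow> f \<in> Arr C"
  by (erule stably_zeroE) (metis comp_arr)

lemma stably_zero_if_dom_in_T: "f \<in> Arr C \<Longrightarrow> Dom C f \<in> T \<Longrightarrow> stably_zero f"
  using stably_zeroI[of "Dom C f" "Idn C (Dom C f)" f] by simp

lemma stably_zero_if_cod_in_T: "f \<in> Arr C \<Longrightarrow> Cod C f \<in> T \<Longrightarrow> stably_zero f"
  using stably_zeroI[of "Cod C f" f "Idn C (Cod C f)"] by simp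

lemma stably_zero_comp_left:
  assumes "stably_zero f" "g \<in> Arr C" "Cod C f = Dom C g"
  shows "stably_zero (g \<cdot> f)"
  using assms(1)
proof (rule stably_zeroE)
  fix T0 a b assume "T0 \<in> T" "a \<in> Arr C" "b \<in> Arr C" "Cod C a = T0" "Dom C b = T0"
    "Cod C b = Cod C f" "b \<cdot> a = f"
  then show ?thesis using stably_zeroI[of T0 a "g \<cdot> b"] assms by simp
qed

lemma stably_zero_comp_right:
  assumes "stably_zero f" "g \<in> Arr C" "Cod C g = Dom C f"
  shows "stably_zero (f \<cdot> g)"
  using assms(1)
proof (rule stably_zeroE)
  fix T0 a b assume "T0 \<in> T" "a \<in> Arr C" "b \<in> Arr C" "Dom C a = Dom C f" "Cod C a = T0"
    "Dom C b = T0" "b \<cdot> a = f"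
  then show ?thesis using stably_zeroI[of T0 "a \<cdot> g" b] comp_assoc[of g a b, symmetric] assms by simp
qed

lemma stably_zero_zer:
  assumes "X \<in> Obj C" "Y \<in> Obj C"
  shows "stably_zero (Zer C X Y)"
proof -
  obtain Z where Z: "Z \<in> T" using zero_object_in_T by blast
  then have "Zer C X Y = Zer C Z Y \<cdot> Zer C X Z" using T_obj assms by simp
  then show ?thesis using stably_zeroI[of Z "Zer C X Z" "Zer C Z Y"] Z T_obj assms by simp
qed

lemma stably_zero_neg:
  assumes "stably_zero f"
  shows "stably_zero (Neg C f)"
  using assms
proof (rule stably_zeroE)
  fix T0 a b assume "T0 \<in> T" "a \<in> Arr C" "b \<in> Arr C" "Cod C a = T0" "Dom C b = T0" "b \<cdot> a = f"
  then show ?thesis using stably_zeroI[of T0 a "Neg C b"] by auto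
qed

lemma stably_zero_add:
  assumes f: "stably_zero f" and g: "stably_zero g" and "Dom C g = Dom C f" "Cod C g = Cod C f"
  shows "stably_zero (f \<oplus> g)"
proof -
  obtain T0 a b where ab: "T0 \<in> T" "a \<in> Arr C" "b \<in> Arr C" "Dom C a = Dom C f" "Cod C a = T0"
    "Dom C b = T0" "Cod C b = Cod C f" "b \<cdot> a = f"
    using f by (rule stably_zeroE)
  obtain T1 c d where cd: "T1 \<in> T" "c \<in> Arr C" "d \<in> Arr C" "Dom C c = Dom C g" "Cod C c = T1"
    "Dom C d = T1" "Cod C d = Cod C g" "d \<cdot> c = g"
    using g by (rule stably_zeroE)
  obtain P i1 i2 p1 p2 where B: "is_biproduct C T0 T1 P i1 i2 p1 p2"
    using biproduct_exists[of T0 T1] T_obj ab cd by blast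
  note bp = biproductD[OF B]
  note arr = stably_zero_arr[OF f] stably_zero_arr[OF g]
  have "p1 \<cdot> (i1 \<cdot> a) = a" "p2 \<cdot> (i1 \<cdot> a) = Zer C (Dom C a) T1"
    "p1 \<cdot> (i2 \<cdot> c) = Zer C (Dom C c) T0" "p2 \<cdot> (i2 \<cdot> c) = c"
    using bp ab cd arr by (simp_all flip: comp_assoc add: T_obj)
  then have "(b \<cdot> p1 \<oplus> d \<cdot> p2) \<cdot> (i1 \<cdot> a \<oplus> i2 \<cdot> c) = f \<oplus> g"
    using bp ab cd assms arr T_obj by simp
  then show ?thesis
    using stably_zeroI[of P "i1 \<cdot> a \<oplus> i2 \<cdot> c" "b \<cdot> p1 \<oplus> d \<cdot> p2"] T_biproduct[OF ab(1) cd(1) B]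
      bp ab cd assms by simp
qed

lemma stable_monoD:
  assumes f: "stable_mono C T f" and g: "g \<in> Arr C" "Cod C g = Dom C f" "stably_zero (f \<cdot> g)"
  shows "stably_zero g"
proof -
  have "f \<in> Arr C" using f unfolding stable_mono_def by blast
  moreover from this have "stable_eq C T (f \<cdot> g) (f \<cdot> Zer C (Dom C g) (Dom C f))"
    unfolding stable_eq_def using g by simp
  ultimately have "stable_eq C T g (Zer C (Dom C g) (Dom C f))"
    using f g unfolding stable_mono_def by (auto simp: hom_def)
  then show ?thesis unfolding stable_eq_def using f g \<open>f \<in> Arr C\<close> by simp
qed

lemma stable_monoI:
  assumes f: "f \<in> Arr C"
    and zero: "\<And>g. g \<in> Arr C \<Longrightarrow> Cod C g = Dom C f \<Longrightarrow> stably_zero (f \<cdot> g) \<Longrightarrow> stably_zero g"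
  shows "stable_mono C T f"
  unfolding stable_mono_def
proof (intro conjI f allI impI)
  fix W g h assume gh: "g \<in> hom C W (Dom C f)" "h \<in> hom C W (Dom C f)" "stable_eq C T (f \<cdot> g) (f \<cdot> h)"
  then have "stably_zero (f \<cdot> (g \<ominus> h))" using f unfolding stable_eq_def by (simp add: hom_def)
  then show "stable_eq C T g h" unfolding stable_eq_def using zero[of "g \<ominus> h"] gh by (simp add: hom_def)
qed

lemma stable_epiD:
  assumes f: "stable_epi C T f" and g: "g \<in> Arr C" "Dom C g = Cod C f" "stably_zero (g \<cdot> f)"
  shows "stably_zero g"
proof -
  have "f \<in> Arr C" using f unfolding stable_epi_def by blast
  moreover from this have "stable_eq C T (g \<cdot> f) (Zer C (Cod C f) (Cod C g) \<cdot> f)"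
    unfolding stable_eq_def using g by simp
  ultimately have "stable_eq C T g (Zer C (Cod C f) (Cod C g))"
    using f g unfolding stable_epi_def by (auto simp: hom_def)
  then show ?thesis unfolding stable_eq_def using f g \<open>f \<in> Arr C\<close> by simp
qed

lemma stable_epiI:
  assumes f: "f \<in> Arr C"
    and zero: "\<And>g. g \<in> Arr C \<Longrightarrow> Dom C g = Cod C f \<Longrightarrow> stably_zero (g \<cdot> f) \<Longrightarrow> stably_zero g"
  shows "stable_epi C T f"
  unfolding stable_epi_def
proof (intro conjI f allI impI)
  fix W g h assume gh: "g \<in> hom C (Cod C f) W" "h \<in> hom C (Cod C f) W" "stable_eq C T (g \<cdot> f) (h \<cdot> f)"
  then have "stably_zero ((g \<ominus> h) \<cdot> f)" using f unfolding stable_eq_def by (simp add: hom_def)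
  then show "stable_eq C T g h" unfolding stable_eq_def using zero[of "g \<ominus> h"] gh by (simp add: hom_def)
qed

lemma stable_epi_cancel:
  assumes f: "stable_epi C T (g \<cdot> \<iota>)" and "g \<in> Arr C" "\<iota> \<in> Arr C" "Cod C \<iota> = Dom C g"
  shows "stable_epi C T g"
proof (rule stable_epiI)
  fix w assume w: "w \<in> Arr C" "Dom C w = Cod C g" "stably_zero (w \<cdot> g)"
  then have "stably_zero (w \<cdot> (g \<cdot> \<iota>))" using stably_zero_comp_right[OF w(3)] assms by simp
  then show "stably_zero w" using stable_epiD[OF f] w assms by simp
qed (use assms in simp)

lemma stable_isoD:
  assumes "stable_iso C T f"
  obtains s where "s \<in> Arr C" "Dom C s = Cod C f" "Cod C s = Dom C f"
    "stably_zero (f \<cdot> s \<ominus> Idn C (Cod C f))"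
  using assms unfolding stable_iso_def stable_eq_def hom_def by blast

lemma stable_isoI:
  assumes sm: "stable_mono C T f" and s: "s \<in> Arr C" "Dom C s = Cod C f" "Cod C s = Dom C f"
    and sect: "stably_zero (f \<cdot> s \<ominus> Idn C (Cod C f))"
  shows "stable_iso C T f"
proof -
  have f: "f \<in> Arr C" using sm unfolding stable_mono_def by blast
  have "f \<cdot> (s \<cdot> f \<ominus> Idn C (Dom C f)) = (f \<cdot> s \<ominus> Idn C (Cod C f)) \<cdot> f" using f s by simp
  moreover have "stably_zero ((f \<cdot> s \<ominus> Idn C (Cod C f)) \<cdot> f)"
    using stably_zero_comp_right[OF sect] f s by simp
  ultimately have "stably_zero (s \<cdot> f \<ominus> Idn C (Dom C f))"
    using stable_monoD[OF sm, of "s \<cdot> f \<ominus> Idn C (Dom C f)"] f s by simp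
  then show ?thesis unfolding stable_iso_def stable_eq_def using f s sect by (auto simp: hom_def)
qed

lemma stable_mono_if_kernel_stably_zero:
  assumes e: "epi C f" and k: "is_kernel C f k" and k0: "stably_zero k"
  shows "stable_mono C T f"
proof (rule stable_monoI)
  show f: "f \<in> Arr C" using e epi_arr by blast
  have kk: "k \<in> Arr C" "Cod C k = Dom C f" using kernelD[OF k] by auto
  fix g assume g: "g \<in> Arr C" "Cod C g = Dom C f" "stably_zero (f \<cdot> g)"
  obtain T0 a b where ab: "T0 \<in> T" "a \<in> Arr C" "b \<in> Arr C" "Dom C a = Dom C g" "Cod C a = T0"
    "Dom C b = T0" "Cod C b = Cod C f" "b \<cdot> a = f \<cdot> g"
    using g(3) by (rule stably_zeroE) (use g f in simp_all)
  \<comment> \<open>lift \<open>b\<close> along \<open>f\<close>; then \<open>g\<close> differs from a map through \<open>T0\<close> by a map into the kernel\<close>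
  obtain b' where b': "b' \<in> Arr C" "Dom C b' = T0" "Cod C b' = Dom C f" "f \<cdot> b' = b"
    using T_lift[OF ab(1) e ab(3) ab(6,7)] by blast
  have "f \<cdot> (g \<ominus> b' \<cdot> a) = Zer C (Dom C g) (Cod C f)"
    using comp_assoc_eq[OF b'(4) f b'(1) ab(2)] g b' ab f by simp
  then obtain u where u: "u \<in> Arr C" "Dom C u = Dom C g" "Cod C u = Dom C k" "k \<cdot> u = g \<ominus> b' \<cdot> a"
    using kernel_factor[OF k, of "g \<ominus> b' \<cdot> a"] g(1,2) b'(1-3) ab(2,4,5) by auto
  have "stably_zero (g \<ominus> b' \<cdot> a)" using stably_zero_comp_right[OF k0 u(1,3)] by (simp only: u(4))
  then have "stably_zero ((g \<ominus> b' \<cdot> a) \<oplus> b' \<cdot> a)"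
    by (rule stably_zero_add[OF _ stably_zeroI[OF ab(1,2) b'(1) ab(5) b'(2)]])
      (use g(1,2) b'(1-3) ab(2-5) in simp_all)
  moreover have "(g \<ominus> b' \<cdot> a) \<oplus> b' \<cdot> a = g" using g(1,2) b'(1-3) ab(2-5) by simp
  ultimately show "stably_zero g" by simp
qed

lemma stable_epiI_image_epi_extends:
  assumes ef: "epi C f" and k: "is_kernel C f k"
    and ext: "\<And>T0 h. T0 \<in> T \<Longrightarrow> h \<in> hom C (Dom C f) T0 \<Longrightarrow> image_epi_extends C k h"
  shows "stable_epi C T f"
proof (rule stable_epiI)
  show f: "f \<in> Arr C" using ef epi_arr by blast
  have kk: "k \<in> Arr C" "Cod C k = Dom C f" "f \<cdot> k = Zer C (Dom C k) (Cod C f)" using kernelD[OF k] by auto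
  fix g assume g: "g \<in> Arr C" "Dom C g = Cod C f" "stably_zero (g \<cdot> f)"
  obtain T0 a b where ab: "T0 \<in> T" "a \<in> Arr C" "b \<in> Arr C" "Dom C a = Dom C f" "Cod C a = T0"
    "Dom C b = T0" "Cod C b = Cod C g" "b \<cdot> a = g \<cdot> f"
    using g(3) by (rule stably_zeroE) (use g f in simp_all)
  have "a \<in> hom C (Dom C f) T0" using ab by (simp add: hom_def)
  then obtain e j u where ej: "is_image_fact C (a \<cdot> k) e j"
    and u_hom: "u \<in> hom C (Cod C k) (Cod C e)" and u_ext: "u \<cdot> k = e"
    using ext[OF ab(1)] unfolding image_epi_extends_def by blast
  have u: "u \<in> Arr C" "Dom C u = Dom C f" "Cod C u = Cod C e" "u \<cdot> k = e"
    using u_hom u_ext kk by (simp_all add: hom_def)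
  note im = image_factD[OF ej]
  \<comment> \<open>\<open>b\<close> kills the image of \<open>a \<cdot> k\<close>, so \<open>g \<cdot> f = b \<cdot> (a \<ominus> j \<cdot> u)\<close>,
    and \<open>a \<ominus> j \<cdot> u\<close> vanishes on the kernel\<close>
  have "(b \<cdot> j) \<cdot> e = Zer C (Dom C e) (Cod C (b \<cdot> j))"
    using comp_assoc_eq[OF ab(8) ab(3) ab(2) kk(1)] im ab kk g f by simp
  then have bj: "b \<cdot> j = Zer C (Dom C j) (Cod C g)"
    using epi_comp_eq_zer[OF im(2), of "b \<cdot> j"] im ab kk by simp
  have "(a \<ominus> j \<cdot> u) \<cdot> k = Zer C (Dom C k) T0"
    using im ab u kk by simp
  then obtain a' where a': "a' \<in> Arr C" "Dom C a' = Cod C f" "Cod C a' = T0" "a' \<cdot> f = a \<ominus> j \<cdot> u"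
    using cokernel_factor[OF cokernel_of_kernel_if_epi[OF ef k], of "a \<ominus> j \<cdot> u"] im ab u kk by auto
  have "b \<cdot> (j \<cdot> u) = Zer C (Dom C f) (Cod C g)"
    using comp_assoc_eq[OF bj] im ab u kk g by simp
  then have gf: "g \<cdot> f = (b \<cdot> a') \<cdot> f" using a' im(4,5,7,8) ab u kk g f by simp
  have "g = b \<cdot> a'" by (rule epiD[OF ef _ _ _ _ _ gf]) (use g a' ab in simp_all)
  then show "stably_zero g" using stably_zeroI[OF ab(1) a'(1) ab(3) a'(3) ab(6)] by simp
qed

lemma stable_epiI_jointly_epi_kernels:
  assumes ef: "epi C f" and k: "is_kernel C f k"
    and ext: "\<And>T0 h. T0 \<in> T \<Longrightarrow> h \<in> hom C (Dom C f) T0 \<Longrightarrow>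
      \<exists>g k'. g \<in> hom C (Cod C f) T0 \<and> is_kernel C (h \<ominus> g \<cdot> f) k' \<and> jointly_epi C k k'"
  shows "stable_epi C T f"
proof (rule stable_epiI)
  show f: "f \<in> Arr C" using ef epi_arr by blast
  have kk: "k \<in> Arr C" "Cod C k = Dom C f" "f \<cdot> k = Zer C (Dom C k) (Cod C f)" using kernelD[OF k] by auto
  fix g0 assume g0: "g0 \<in> Arr C" "Dom C g0 = Cod C f" "stably_zero (g0 \<cdot> f)"
  obtain T0 a b where ab: "T0 \<in> T" "a \<in> Arr C" "b \<in> Arr C" "Dom C a = Dom C f" "Cod C a = T0"
    "Dom C b = T0" "Cod C b = Cod C g0" "b \<cdot> a = g0 \<cdot> f"
    using g0(3) by (rule stably_zeroE) (use g0 f in simp_all)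
  have "a \<in> hom C (Dom C f) T0" using ab by (simp add: hom_def)
  then obtain g k' where g: "g \<in> hom C (Cod C f) T0" and k': "is_kernel C (a \<ominus> g \<cdot> f) k'"
    and je: "jointly_epi C k k'"
    using ext[OF ab(1)] by blast
  have gg: "g \<in> Arr C" "Dom C g = Cod C f" "Cod C g = T0" using g by (auto simp: hom_def)
  have kk': "k' \<in> Arr C" "Cod C k' = Dom C f" "(a \<ominus> g \<cdot> f) \<cdot> k' = Zer C (Dom C k') T0"
    using kernelD[OF k'] ab gg f by auto
  \<comment> \<open>\<open>b \<cdot> (a \<ominus> g \<cdot> f)\<close> vanishes on both \<open>k\<close> and \<open>k'\<close>, which together cover the domain\<close>
  have on_k: "(b \<cdot> (a \<ominus> g \<cdot> f)) \<cdot> k = Zer C (Dom C k) (Cod C g0)"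
    using comp_assoc_eq[OF ab(8) ab(3) ab(2) kk(1)] comp_assoc_eq[OF kk(3) f kk(1)] ab gg kk g0 f
      T_obj[OF ab(1)] by simp
  have "(b \<cdot> (a \<ominus> g \<cdot> f)) \<cdot> k' = b \<cdot> ((a \<ominus> g \<cdot> f) \<cdot> k')"
    by (rule comp_assoc) (use kk' ab gg f in simp_all)
  also have "\<dots> = Zer C (Dom C k') (Cod C g0)" by (subst kk'(3)) (use kk' ab in simp)
  finally have on_k': "(b \<cdot> (a \<ominus> g \<cdot> f)) \<cdot> k' = Zer C (Dom C k') (Cod C g0)" .
  have "b \<cdot> (a \<ominus> g \<cdot> f) = Zer C (Dom C f) (Cod C g0)"
    using jointly_epiD[OF je, of "b \<cdot> (a \<ominus> g \<cdot> f)"] on_k on_k' ab gg f g0 kk kk' by simp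
  then have eq: "g0 \<cdot> f = (b \<cdot> g) \<cdot> f"
    using diff_eq_zer_iff[of "b \<cdot> a" "b \<cdot> (g \<cdot> f)"] ab gg f g0 by simp
  have "g0 = b \<cdot> g" by (rule epiD[OF ef _ _ _ _ _ eq]) (use g0 ab gg in simp_all)
  then show "stably_zero g0" using stably_zeroI[OF ab(1) gg(1) ab(3) gg(3) ab(6)] by simp
qed

lemma stable_epi_image_epi_extension:
  assumes ge: "epi C g" and \<mu>: "is_kernel C g \<mu>" and se: "stable_epi C T g"
    and T': "T' \<in> T" and h: "h \<in> Arr C" "Dom C h = Dom C g" "Cod C h = T'"
    and ej: "is_image_fact C (h \<cdot> \<mu>) e j"
  obtains g' u where "g' \<in> Arr C" "Dom C g' = Cod C g" "Cod C g' = T'"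
    "u \<in> Arr C" "Dom C u = Dom C g" "Cod C u = Dom C j" "h \<ominus> g' \<cdot> g = j \<cdot> u" "u \<cdot> \<mu> = e"
proof -
  have g: "g \<in> Arr C" using ge epi_arr by blast
  have mm: "\<mu> \<in> Arr C" "Cod C \<mu> = Dom C g" "g \<cdot> \<mu> = Zer C (Dom C \<mu>) (Cod C g)"
    using kernelD[OF \<mu>] by auto
  note im = image_factD[OF ej]
  obtain d where d: "is_cokernel C j d" using cokernel_exists[OF im(5)] by blast
  have dd: "d \<in> Arr C" "Dom C d = T'" "d \<cdot> j = Zer C (Dom C j) (Cod C d)"
    using cokernelD[OF d] im h mm by auto
  \<comment> \<open>\<open>d \<cdot> h\<close> vanishes on the kernel of \<open>g\<close>, so it factors as \<open>w \<cdot> g\<close> with \<open>w\<close> stably zero\<close>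
  have "(d \<cdot> h) \<cdot> \<mu> = Zer C (Dom C \<mu>) (Cod C d)"
    using comp_assoc_eq[OF dd(3) dd(1) im(5) im(4)] im h mm dd by simp
  then obtain w where w: "w \<in> Arr C" "Dom C w = Cod C g" "Cod C w = Cod C d" "w \<cdot> g = d \<cdot> h"
    using cokernel_factor[OF cokernel_of_kernel_if_epi[OF ge \<mu>], of "d \<cdot> h"] h mm dd by auto
  have "stably_zero (w \<cdot> g)" using stably_zeroI[OF T' h(1) dd(1) h(3) dd(2)] w(4) by simp
  then have "stably_zero w" using stable_epiD[OF se w(1,2)] by blast
  then obtain T2 \<alpha> \<beta> where ab: "T2 \<in> T" "\<alpha> \<in> Arr C" "\<beta> \<in> Arr C" "Dom C \<alpha> = Cod C g"
    "Cod C \<alpha> = T2" "Dom C \<beta> = T2" "Cod C \<beta> = Cod C d" "\<beta> \<cdot> \<alpha> = w"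
    by (rule stably_zeroE) (use w in simp_all)
  obtain \<beta>' where b': "\<beta>' \<in> Arr C" "Dom C \<beta>' = T2" "Cod C \<beta>' = Dom C d" "d \<cdot> \<beta>' = \<beta>"
    using T_lift[OF ab(1) cokernel_epi[OF d] ab(3) ab(6,7)] by blast
  define g' where "g' = \<beta>' \<cdot> \<alpha>"
  have g': "g' \<in> Arr C" "Dom C g' = Cod C g" "Cod C g' = T'" unfolding g'_def using ab b' dd by simp_all
  have "d \<cdot> (g' \<cdot> g) = w \<cdot> g"
    unfolding g'_def
    using comp_assoc_eq[OF b'(4) dd(1) b'(1), of "\<alpha> \<cdot> g"] comp_assoc_eq[OF ab(8) ab(3) ab(2) g] ab b' g
    by simp
  then have "d \<cdot> (h \<ominus> g' \<cdot> g) = Zer C (Dom C g) (Cod C d)"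
    using w(4) h g g' dd by simp
  then obtain u where u: "u \<in> Arr C" "Dom C u = Dom C g" "Cod C u = Dom C j" "j \<cdot> u = h \<ominus> g' \<cdot> g"
    using kernel_factor[OF kernel_of_cokernel_if_mono[OF im(3) d], of "h \<ominus> g' \<cdot> g"] h g g' dd by auto
  have "j \<cdot> (u \<cdot> \<mu>) = j \<cdot> e"
    using comp_assoc_eq[OF u(4) im(5) u(1) mm(1)] u mm im h g g' T_obj[OF T'] by simp
  then have "u \<cdot> \<mu> = e" using monoD[OF im(3), of "u \<cdot> \<mu>" e] u mm im h by simp
  then show ?thesis using that g' u by simp
qed

lemma retraction_if_stable_iso:
  assumes ef: "epi C f" and si: "stable_iso C T f"
  shows "retraction C f"
proof -
  have f: "f \<in> Arr C" using ef epi_arr by blast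
  obtain s where s: "s \<in> Arr C" "Dom C s = Cod C f" "Cod C s = Dom C f"
    and s0: "stably_zero (f \<cdot> s \<ominus> Idn C (Cod C f))"
    using si by (rule stable_isoD)
  obtain T0 a b where ab: "T0 \<in> T" "a \<in> Arr C" "b \<in> Arr C" "Dom C a = Cod C f" "Cod C a = T0"
    "Dom C b = T0" "Cod C b = Cod C f" "b \<cdot> a = f \<cdot> s \<ominus> Idn C (Cod C f)"
    using s0 by (rule stably_zeroE) (use s f in simp_all)
  \<comment> \<open>the error term lifts along \<open>f\<close> since \<open>T0\<close> is projective\<close>
  obtain b' where b': "b' \<in> Arr C" "Dom C b' = T0" "Cod C b' = Dom C f" "f \<cdot> b' = b"
    using T_lift[OF ab(1) ef ab(3) ab(6,7)] by blast
  have "f \<cdot> (s \<ominus> b' \<cdot> a) = f \<cdot> s \<ominus> (f \<cdot> s \<ominus> Idn C (Cod C f))"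
    using comp_assoc_eq[OF b'(4) f b'(1) ab(2)] s b' ab f by simp
  also have "\<dots> = Idn C (Cod C f)" using s f by simp
  finally show ?thesis unfolding retraction_def using s b' ab f
    by (intro bexI[of _ "s \<ominus> b' \<cdot> a"]) (auto simp: hom_def)
qed

lemma stable_iso_if_split_factors:
  assumes \<iota>: "\<iota> \<in> hom C X P" and g: "g \<in> hom C P Y" and r: "r \<in> hom C P X" and s: "s \<in> hom C Y P"
    and r\<iota>: "r \<cdot> \<iota> = Idn C X" and gs: "g \<cdot> s = Idn C Y"
    and sm_g: "stable_mono C T g" and se: "stable_epi C T (g \<cdot> \<iota>)" and sm: "stable_mono C T (g \<cdot> \<iota>)"
  shows "stable_iso C T (g \<cdot> \<iota>)"
proof -
  have ty: "\<iota> \<in> Arr C" "Dom C \<iota> = X" "Cod C \<iota> = P" "g \<in> Arr C" "Dom C g = P" "Cod C g = Y"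
    "r \<in> Arr C" "Dom C r = P" "Cod C r = X" "s \<in> Arr C" "Dom C s = Y" "Cod C s = P"
    using assms by (auto simp: hom_def)
  have obj: "P \<in> Obj C" "X \<in> Obj C" "Y \<in> Obj C" using ty arr_dom arr_cod by metis+
  define D where "D = s \<cdot> g \<ominus> Idn C P"
  define W where "W = \<iota> \<cdot> r \<ominus> Idn C P"
  have D: "D \<in> Arr C" "Dom C D = P" "Cod C D = P" and W: "W \<in> Arr C" "Dom C W = P" "Cod C W = P"
    unfolding D_def W_def using ty obj by simp_all
  have "g \<cdot> D = Zer C P Y" unfolding D_def using comp_assoc_eq[OF gs] ty obj by simp
  then have "stably_zero D" using stable_monoD[OF sm_g D(1)] stably_zero_zer D ty obj by simp
  then have "stably_zero (W \<cdot> D)" using stably_zero_comp_left[OF _ W(1)] D W by simp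
  then have "stably_zero ((W \<cdot> D) \<cdot> \<iota>)" by (rule stably_zero_comp_right) (use D W ty in simp_all)
  moreover have "W \<cdot> \<iota> = Zer C X P" unfolding W_def using r\<iota> ty obj by simp
  then have "(W \<cdot> D) \<cdot> \<iota> = (W \<cdot> s) \<cdot> (g \<cdot> \<iota>)"
    unfolding D_def using comp_assoc_eq[OF \<open>W \<cdot> \<iota> = Zer C X P\<close>] W ty obj by simp
  ultimately have "stably_zero (W \<cdot> s)" using stable_epiD[OF se] W ty by simp
  then have "stably_zero (g \<cdot> (W \<cdot> s))" using stably_zero_comp_left W ty by simp
  moreover have "g \<cdot> (W \<cdot> s) = (g \<cdot> \<iota>) \<cdot> (r \<cdot> s) \<ominus> Idn C Y"
    unfolding W_def using gs ty obj by simp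
  ultimately show ?thesis using stable_isoI[OF sm, of "r \<cdot> s"] ty by simp
qed

lemma stable_balanced_retraction:
  assumes "stable_balanced C T" "epi C f" "is_kernel C f k" "stably_zero k" "stable_epi C T f"
  shows "retraction C f"
  using assms stable_mono_if_kernel_stably_zero retraction_if_stable_iso epi_arr
  unfolding stable_balanced_def by blast

subsection \<open>Reduction to epimorphisms with kernel in T\<close>

lemma cokernel_covered_from_T:
  assumes se: "stable_epi C T f" and c: "is_cokernel C f c"
  obtains T0 t where "T0 \<in> T" "t \<in> Arr C" "Dom C t = T0" "Cod C t = Cod C f" "epi C (c \<cdot> t)"
proof -
  have cc: "f \<in> Arr C" "c \<in> Arr C" "Dom C c = Cod C f" "c \<cdot> f = Zer C (Dom C f) (Cod C c)"
    using cokernelD[OF c] by auto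
  have "stably_zero c" using stable_epiD[OF se cc(2,3)] stably_zero_zer cc by simp
  then obtain T0 a b where ab: "T0 \<in> T" "a \<in> Arr C" "b \<in> Arr C" "Dom C a = Cod C f"
    "Cod C a = T0" "Dom C b = T0" "Cod C b = Cod C c" "b \<cdot> a = c"
    by (rule stably_zeroE) (use cc in simp_all)
  have "epi C b" using epi_cancel[of b a] cokernel_epi[OF c] ab by simp
  moreover obtain t where "t \<in> Arr C" "Dom C t = T0" "Cod C t = Dom C c" "c \<cdot> t = b"
    using T_lift[OF ab(1) cokernel_epi[OF c] ab(3) ab(6,7)] by blast
  ultimately show ?thesis using that ab(1) cc(3) by simp
qed

context
  fixes f t T0 S i1 i2 p1 p2
  assumes f: "f \<in> Arr C" and T0: "T0 \<in> T" and t: "t \<in> Arr C" "Dom C t = T0" "Cod C t = Cod C f"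
    and B: "is_biproduct C (Dom C f) T0 S i1 i2 p1 p2"
begin

lemma copair_kernel_stably_zero:
  assumes sm: "stable_mono C T f" and k': "is_kernel C (f \<cdot> p1 \<oplus> t \<cdot> p2) k'"
  shows "stably_zero k'"
proof -
  note bp = biproductD[OF B]
  have kk: "k' \<in> Arr C" "Cod C k' = S" "(f \<cdot> p1 \<oplus> t \<cdot> p2) \<cdot> k' = Zer C (Dom C k') (Cod C f)"
    using kernelD[OF k'] bp f t by auto
  have "f \<cdot> (p1 \<cdot> k') \<oplus> t \<cdot> (p2 \<cdot> k') = Zer C (Dom C k') (Cod C f)" using bp f t kk by simp
  then have "f \<cdot> (p1 \<cdot> k') = Neg C (t \<cdot> (p2 \<cdot> k'))"
    using eq_neg_if_add_eq_zer[of "f \<cdot> (p1 \<cdot> k')" "t \<cdot> (p2 \<cdot> k')"] bp f t kk by simp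
  moreover have "stably_zero (Neg C (t \<cdot> (p2 \<cdot> k')))"
    using stably_zero_neg stably_zeroI[OF T0, of "p2 \<cdot> k'" t] bp t kk by simp
  ultimately have "stably_zero (p1 \<cdot> k')" using stable_monoD[OF sm, of "p1 \<cdot> k'"] bp kk by simp
  moreover have "stably_zero (p2 \<cdot> k')" using stably_zero_if_cod_in_T[of "p2 \<cdot> k'"] bp kk T0 by simp
  ultimately have "stably_zero (i1 \<cdot> (p1 \<cdot> k') \<oplus> i2 \<cdot> (p2 \<cdot> k'))"
    using stably_zero_add[OF stably_zero_comp_left stably_zero_comp_left] bp kk by simp
  moreover have "i1 \<cdot> (p1 \<cdot> k') \<oplus> i2 \<cdot> (p2 \<cdot> k') = (i1 \<cdot> p1 \<oplus> i2 \<cdot> p2) \<cdot> k'"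
    using bp(1-13) kk by simp
  ultimately show ?thesis using bp kk by simp
qed

lemma stable_iso_if_copair_stable_iso:
  assumes sm: "stable_mono C T f" and si: "stable_iso C T (f \<cdot> p1 \<oplus> t \<cdot> p2)"
  shows "stable_iso C T f"
proof -
  note bp = biproductD[OF B]
  obtain s where s: "s \<in> Arr C" "Dom C s = Cod C f" "Cod C s = S"
    and s0: "stably_zero ((f \<cdot> p1 \<oplus> t \<cdot> p2) \<cdot> s \<ominus> Idn C (Cod C f))"
    using si by (rule stable_isoD) (use bp f t in simp_all)
  let ?A = "f \<cdot> (p1 \<cdot> s)" and ?B = "t \<cdot> (p2 \<cdot> s)" and ?I = "Idn C (Cod C f)"
  \<comment> \<open>the \<open>T0\<close>-component of the stable section is stably zero\<close>
  have eq: "(f \<cdot> p1 \<oplus> t \<cdot> p2) \<cdot> s \<ominus> ?I = ?B \<oplus> (?A \<ominus> ?I)"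
    using add_left_commute[of ?A ?B "Neg C ?I"] bp s t f by simp
  have "stably_zero (Neg C ?B)"
    using stably_zero_neg stably_zeroI[OF T0, of "p2 \<cdot> s" t] bp t s by simp
  then have "stably_zero (Neg C ?B \<oplus> ((f \<cdot> p1 \<oplus> t \<cdot> p2) \<cdot> s \<ominus> ?I))"
    by (rule stably_zero_add[OF _ s0]) (use bp s t f in simp_all)
  then have "stably_zero (Neg C ?B \<oplus> (?B \<oplus> (?A \<ominus> ?I)))" by (simp only: eq)
  then have "stably_zero (?A \<ominus> ?I)" using bp s t f by simp
  then show ?thesis using stable_isoI[OF sm, of "p1 \<cdot> s"] bp s f by simp
qed

end

lemma epi_replacement:
  assumes f: "f \<in> Arr C" and sm: "stable_mono C T f" and se: "stable_epi C T f"
    and ni: "\<not> stable_iso C T f"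
  obtains f' k' where "epi C f'" "is_kernel C f' k'" "stably_zero k'" "stable_epi C T f'"
    "\<not> stable_iso C T f'"
proof -
  obtain c where c: "is_cokernel C f c" using cokernel_exists[OF f] by blast
  obtain T0 t where t: "T0 \<in> T" "t \<in> Arr C" "Dom C t = T0" "Cod C t = Cod C f" "epi C (c \<cdot> t)"
    using cokernel_covered_from_T[OF se c] by blast
  obtain S i1 i2 p1 p2 where B: "is_biproduct C (Dom C f) T0 S i1 i2 p1 p2"
    using biproduct_exists[of "Dom C f" T0] f T_obj[OF t(1)] by auto
  note bp = biproductD[OF B]
  let ?f' = "f \<cdot> p1 \<oplus> t \<cdot> p2"
  have f': "?f' \<in> Arr C" "Cod C ?f' = Cod C f" using bp f t by simp_all
  have "epi C ?f'"
    using epi_copair_iff_jointly_epi[of f t] jointly_epi_if_cokernel_comp_epi[OF c t(5) t(2,4)] B f t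
    by simp
  moreover have "stable_epi C T ?f'"
    using stable_epi_cancel[of ?f' i1] copair_comp_inj(1)[of f t] se B bp f t by simp
  moreover obtain k' where k': "is_kernel C ?f' k'" using kernel_exists[OF f'(1)] by blast
  ultimately show ?thesis
    using that copair_kernel_stably_zero[OF f t(1-4) B sm k']
      stable_iso_if_copair_stable_iso[OF f t(1-4) B sm] ni by blast
qed

context
  fixes f k a T0 S i1 i2 p1 p2 c g
  assumes ef: "epi C f" and k: "is_kernel C f k" and a: "a \<in> Arr C" "Dom C a = Dom C k" "Cod C a = T0"
    and B: "is_biproduct C (Dom C f) T0 S i1 i2 p1 p2"
    and c: "is_cokernel C (i1 \<cdot> k \<ominus> i2 \<cdot> a) c"
    and g: "g \<in> Arr C" "Dom C g = Cod C c" "Cod C g = Cod C f" "g \<cdot> c = f \<cdot> p1"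
begin

text \<open>\<open>c \<cdot> i1\<close> and \<open>c \<cdot> i2\<close> form the pushout of \<open>k\<close> along \<open>a\<close>; pushing the short exact
  sequence \<open>k, f\<close> out along \<open>a\<close> gives the epimorphism \<open>g\<close> with kernel \<open>c \<cdot> i2\<close>.\<close>

lemma pushout_data:
  shows "i1 \<cdot> k \<ominus> i2 \<cdot> a \<in> Arr C" "Dom C (i1 \<cdot> k \<ominus> i2 \<cdot> a) = Dom C k"
    "Cod C (i1 \<cdot> k \<ominus> i2 \<cdot> a) = S"
    "p1 \<cdot> (i1 \<cdot> k \<ominus> i2 \<cdot> a) = k" "p2 \<cdot> (i1 \<cdot> k \<ominus> i2 \<cdot> a) = Neg C a"
    "c \<in> Arr C" "Dom C c = S" "c \<cdot> (i1 \<cdot> k \<ominus> i2 \<cdot> a) = Zer C (Dom C k) (Cod C c)"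
proof -
  note bp = biproductD[OF B]
  have kk: "k \<in> Arr C" "Cod C k = Dom C f" using kernelD[OF k] by auto
  show "i1 \<cdot> k \<ominus> i2 \<cdot> a \<in> Arr C" "Dom C (i1 \<cdot> k \<ominus> i2 \<cdot> a) = Dom C k"
    "Cod C (i1 \<cdot> k \<ominus> i2 \<cdot> a) = S"
    "p1 \<cdot> (i1 \<cdot> k \<ominus> i2 \<cdot> a) = k" "p2 \<cdot> (i1 \<cdot> k \<ominus> i2 \<cdot> a) = Neg C a"
    using bp kk a arr_cod[OF a(1)] arr_cod[OF kk(1)] by (simp_all flip: comp_assoc)
  then show "c \<in> Arr C" "Dom C c = S" "c \<cdot> (i1 \<cdot> k \<ominus> i2 \<cdot> a) = Zer C (Dom C k) (Cod C c)"
    using cokernelD[OF c] bp kk a by auto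
qed

lemma pushout_comp_inj1: "g \<cdot> (c \<cdot> i1) = f"
  using comp_assoc_eq[OF g(4) g(1) pushout_data(6) biproductD(2)[OF B]] biproductD[OF B] pushout_data
    g epi_arr[OF ef] by simp

lemma pushout_comp_inj2: "g \<cdot> (c \<cdot> i2) = Zer C T0 (Cod C f)"
  using comp_assoc_eq[OF g(4) g(1) pushout_data(6) biproductD(3)[OF B]] biproductD[OF B] pushout_data
    g epi_arr[OF ef] a arr_cod[OF a(1)] by simp

lemma pushout_epi: "epi C g"
  using epi_cancel[of g "c \<cdot> i1"] pushout_comp_inj1 ef g biproductD[OF B] pushout_data by simp

lemma pushout_inj2_mono: "mono C (c \<cdot> i2)"
proof -
  note bp = biproductD[OF B] and pd = pushout_data
  have kk: "k \<in> Arr C" "Cod C k = Dom C f" using kernelD[OF k] by auto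
  let ?m = "i1 \<cdot> k \<ominus> i2 \<cdot> a"
  have "mono C ?m" using mono_cancel[of p1 ?m] pd kernel_mono[OF k] bp by simp
  then have cm: "is_kernel C c ?m" using kernel_of_cokernel_if_mono[OF _ c] by blast
  show ?thesis
  proof (rule monoI_zer)
    fix z assume z: "z \<in> Arr C" "Cod C z = Dom C (c \<cdot> i2)" "(c \<cdot> i2) \<cdot> z = Zer C (Dom C z) (Cod C (c \<cdot> i2))"
    \<comment> \<open>\<open>i2 \<cdot> z\<close> lies in the image of \<open>?m\<close>, whose first component \<open>k\<close> is mono\<close>
    have "c \<cdot> (i2 \<cdot> z) = Zer C (Dom C (i2 \<cdot> z)) (Cod C c)" using z pd bp by simp
    then obtain v where v: "v \<in> Arr C" "Dom C v = Dom C z" "Cod C v = Dom C ?m" "?m \<cdot> v = i2 \<cdot> z"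
      using kernel_factor[OF cm, of "i2 \<cdot> z"] z pd bp by auto
    have "k \<cdot> v = p1 \<cdot> (i2 \<cdot> z)" using comp_assoc_eq[OF pd(4) bp(4) pd(1) v(1)] v pd bp by simp
    then have "k \<cdot> v = Zer C (Dom C v) (Cod C k)"
      using comp_assoc_eq[OF bp(17) bp(4) bp(3) z(1)] z v bp pd kk arr_dom[OF epi_arr[OF ef]] by simp
    then have "v = Zer C (Dom C v) (Dom C k)" using mono_comp_eq_zer[OF kernel_mono[OF k] v(1)] v pd by simp
    then have "i2 \<cdot> z = Zer C (Dom C z) S" using v pd z bp by simp
    then have "p2 \<cdot> (i2 \<cdot> z) = Zer C (Dom C z) T0" using bp z pd by simp
    then show "z = Zer C (Dom C z) (Dom C (c \<cdot> i2))" using comp_assoc[of z i2 p2] bp z pd by simp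
  qed (use pd bp in simp)
qed

lemma pushout_cokernel: "is_cokernel C (c \<cdot> i2) g"
proof -
  note bp = biproductD[OF B] and pd = pushout_data
  have kk: "k \<in> Arr C" "Cod C k = Dom C f" using kernelD[OF k] by auto
  have f: "f \<in> Arr C" using epi_arr[OF ef] .
  show ?thesis
  proof (rule is_cokernelI)
    fix \<psi> assume \<psi>: "\<psi> \<in> Arr C" "Dom C \<psi> = Cod C (c \<cdot> i2)"
      "\<psi> \<cdot> (c \<cdot> i2) = Zer C (Dom C (c \<cdot> i2)) (Cod C \<psi>)"
    have \<psi>2: "\<psi> \<cdot> (c \<cdot> i2) = Zer C T0 (Cod C \<psi>)" using \<psi> pd bp by simp
    \<comment> \<open>\<open>\<psi> \<cdot> c \<cdot> i1\<close> vanishes on \<open>k\<close>, hence factors through its cokernel \<open>f\<close>\<close>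
    have "c \<cdot> (i1 \<cdot> k) = c \<cdot> (i2 \<cdot> a)"
      using diff_eq_zer_iff[of "c \<cdot> (i1 \<cdot> k)" "c \<cdot> (i2 \<cdot> a)"] pd bp kk a by simp
    then have "(\<psi> \<cdot> (c \<cdot> i1)) \<cdot> k = Zer C (Dom C k) (Cod C \<psi>)"
      using comp_assoc_eq[OF \<psi>2, of a] \<psi> pd bp kk a by simp
    then obtain l where l: "l \<in> Arr C" "Dom C l = Cod C f" "Cod C l = Cod C \<psi>" "l \<cdot> f = \<psi> \<cdot> (c \<cdot> i1)"
      using cokernel_factor[OF cokernel_of_kernel_if_epi[OF ef k], of "\<psi> \<cdot> (c \<cdot> i1)"] \<psi> pd bp kk
      by auto
    have "\<psi> \<cdot> c = (\<psi> \<cdot> c) \<cdot> (i1 \<cdot> p1 \<oplus> i2 \<cdot> p2)" using \<psi>(1,2) pd bp by simp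
    also have "\<dots> = (\<psi> \<cdot> (c \<cdot> i1)) \<cdot> p1 \<oplus> (\<psi> \<cdot> (c \<cdot> i2)) \<cdot> p2"
      using \<psi>(1,2) pd bp(1-13) by simp
    also have "\<dots> = (l \<cdot> g) \<cdot> c"
      using comp_assoc_eq[OF l(4) l(1) f bp(4)] \<psi>2 l(1-3) f g \<psi> pd bp arr_cod[OF a(1)] a by simp
    finally have eq: "\<psi> \<cdot> c = (l \<cdot> g) \<cdot> c" .
    have "\<psi> = l \<cdot> g" by (rule epiD[OF cokernel_epi[OF c] _ _ _ _ _ eq]) (use \<psi> l g pd bp in simp_all)
    then show "\<exists>u. u \<in> Arr C \<and> Dom C u = Cod C g \<and> Cod C u = Cod C \<psi> \<and> u \<cdot> g = \<psi>"
      using l g by auto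
  qed (use pushout_epi pushout_comp_inj2 g pd bp arr_cod[OF a(1)] a in simp_all)
qed

lemma pushout_kernel: "is_kernel C g (c \<cdot> i2)"
  using kernel_of_cokernel_if_mono[OF pushout_inj2_mono pushout_cokernel] .

lemma pushout_inj1_split:
  assumes b: "b \<in> Arr C" "Dom C b = T0" "Cod C b = Dom C f" "b \<cdot> a = k"
  obtains r where "r \<in> hom C (Cod C c) (Dom C f)" "r \<cdot> (c \<cdot> i1) = Idn C (Dom C f)"
proof -
  note bp = biproductD[OF B] and pd = pushout_data
  have kk: "k \<in> Arr C" "Cod C k = Dom C f" using kernelD[OF k] by auto
  have "(p1 \<oplus> b \<cdot> p2) \<cdot> (i1 \<cdot> k \<ominus> i2 \<cdot> a) = Zer C (Dom C k) (Dom C f)"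
    using biproduct_proj_inj[OF B] pd bp b kk a arr_cod[OF a(1)] arr_dom[OF a(1)] by simp
  then obtain r where r: "r \<in> Arr C" "Dom C r = Cod C c" "Cod C r = Dom C f" "r \<cdot> c = p1 \<oplus> b \<cdot> p2"
    using cokernel_factor[OF c, of "p1 \<oplus> b \<cdot> p2"] pd bp b a by auto
  have "r \<cdot> (c \<cdot> i1) = Idn C (Dom C f)"
    using comp_assoc_eq[OF r(4) r(1) pd(6) bp(2)] r pd bp b arr_cod[OF a(1)] a
      arr_dom[OF epi_arr[OF ef]] by simp
  then show ?thesis using that r by (simp add: hom_def)
qed

end

lemma kernel_in_T_replacement:
  assumes ef: "epi C f" and k: "is_kernel C f k" and k0: "stably_zero k" and se: "stable_epi C T f"
    and ni: "\<not> stable_iso C T f"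
  obtains g \<mu> where "epi C g" "is_kernel C g \<mu>" "Dom C \<mu> \<in> T" "stable_epi C T g" "\<not> retraction C g"
proof -
  have f: "f \<in> Arr C" using epi_arr[OF ef] .
  have kk: "k \<in> Arr C" "Cod C k = Dom C f" "f \<cdot> k = Zer C (Dom C k) (Cod C f)" using kernelD[OF k] by auto
  obtain T0 a b where ab: "T0 \<in> T" "a \<in> Arr C" "b \<in> Arr C" "Dom C a = Dom C k" "Cod C a = T0"
    "Dom C b = T0" "Cod C b = Dom C f" "b \<cdot> a = k"
    using k0 by (rule stably_zeroE) (use kk in simp_all)
  obtain S i1 i2 p1 p2 where B: "is_biproduct C (Dom C f) T0 S i1 i2 p1 p2"
    using biproduct_exists[of "Dom C f" T0] f T_obj[OF ab(1)] by auto
  note bp = biproductD[OF B] and pi = biproduct_proj_inj[OF B]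
  let ?m = "i1 \<cdot> k \<ominus> i2 \<cdot> a"
  have m: "?m \<in> Arr C" "p1 \<cdot> ?m = k" using bp pi kk ab arr_cod[OF ab(2)] arr_dom[OF f] by simp_all
  obtain c where c: "is_cokernel C ?m c" using cokernel_exists[OF m(1)] by blast
  have "(f \<cdot> p1) \<cdot> ?m = Zer C (Dom C ?m) (Cod C (f \<cdot> p1))"
    using pi bp kk ab f arr_dom[OF f] arr_cod[OF f] arr_cod[OF ab(2)] by simp
  then obtain g where g: "g \<in> Arr C" "Dom C g = Cod C c" "Cod C g = Cod C f" "g \<cdot> c = f \<cdot> p1"
    using cokernel_factor[OF c, of "f \<cdot> p1"] bp kk ab f by auto
  note po = ef k ab(2,4,5) B c g
  have \<mu>: "c \<cdot> i2 \<in> Arr C" "Dom C (c \<cdot> i2) = T0" using pushout_data[OF po] bp by simp_all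
  have ge: "epi C g" and gk: "is_kernel C g (c \<cdot> i2)" using pushout_epi[OF po] pushout_kernel[OF po] .
  have gi: "g \<cdot> (c \<cdot> i1) = f" using pushout_comp_inj1[OF po] .
  have "stable_epi C T g" using stable_epi_cancel[of g "c \<cdot> i1"] se gi g pushout_data[OF po] bp by simp
  moreover have "\<not> retraction C g"
  proof
    assume "retraction C g"
    then obtain s where s: "s \<in> hom C (Cod C f) (Cod C c)" "g \<cdot> s = Idn C (Cod C f)"
      unfolding retraction_def using g by auto
    obtain r where r: "r \<in> hom C (Cod C c) (Dom C f)" "r \<cdot> (c \<cdot> i1) = Idn C (Dom C f)"
      using pushout_inj1_split[OF po ab(3,6,7,8)] by blast
    have "stable_mono C T g"
      using stable_mono_if_kernel_stably_zero[OF ge gk stably_zero_if_dom_in_T] \<mu> ab(1) by simp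
    then have "stable_iso C T (g \<cdot> (c \<cdot> i1))"
      using stable_iso_if_split_factors[OF _ _ r(1) s(1) r(2) s(2)]
        stable_mono_if_kernel_stably_zero[OF ef k k0] se gi pushout_data[OF po] bp g
      by (simp add: hom_def)
    then show False using ni gi by simp
  qed
  ultimately show ?thesis using that ge gk \<mu> ab(1) by simp
qed

lemma stable_balanced_if_retractions:
  assumes retr: "\<And>g \<mu>. epi C g \<Longrightarrow> is_kernel C g \<mu> \<Longrightarrow> Dom C \<mu> \<in> T \<Longrightarrow> stable_epi C T g \<Longrightarrow>
    retraction C g"
  shows "stable_balanced C T"
  unfolding stable_balanced_def
proof (intro ballI impI)
  fix f assume f: "f \<in> Arr C" and sm: "stable_mono C T f" and se: "stable_epi C T f"
  show "stable_iso C T f"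
  proof (rule ccontr)
    assume "\<not> stable_iso C T f"
    then obtain f' k' where "epi C f'" "is_kernel C f' k'" "stably_zero k'" "stable_epi C T f'"
      "\<not> stable_iso C T f'"
      using epi_replacement[OF f sm se] by blast
    then obtain g \<mu> where "epi C g" "is_kernel C g \<mu>" "Dom C \<mu> \<in> T" "stable_epi C T g" "\<not> retraction C g"
      using kernel_in_T_replacement by blast
    then show False using retr by blast
  qed
qed

subsection \<open>The conditions (2)-(5)\<close>

lemma cond2_if_stable_balanced:
  assumes bal: "stable_balanced C T"
  shows "cond2 C T"
  unfolding cond2_def
proof (intro allI impI)
  fix \<mu> assume m: "mono C \<mu>" and ns: "\<not> split_mono C \<mu>" and \<mu>0: "stably_zero \<mu>"
  obtain c where c: "is_cokernel C \<mu> c" using cokernel_exists[OF mono_arr[OF m]] by blast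
  have ck: "is_kernel C c \<mu>" using kernel_of_cokernel_if_mono[OF m c] .
  have ce: "epi C c" using cokernel_epi[OF c] .
  have cc: "c \<in> Arr C" "Dom C c = Cod C \<mu>" "\<mu> \<in> Arr C" using cokernelD[OF c] by auto
  show "\<exists>T'\<in>T. \<exists>h\<in>hom C (Cod C \<mu>) T'. no_coinciding C \<mu> h"
  proof (rule ccontr)
    assume "\<not> (\<exists>T'\<in>T. \<exists>h\<in>hom C (Cod C \<mu>) T'. no_coinciding C \<mu> h)"
    then have "image_epi_extends C \<mu> h" if "T0 \<in> T" "h \<in> hom C (Dom C c) T0" for T0 h
      using no_coinciding_iff[of \<mu> h] that cc by (auto simp: hom_def)
    then have "stable_epi C T c" using stable_epiI_image_epi_extends[OF ce ck] by blast
    then have "retraction C c" using stable_balanced_retraction[OF bal ce ck \<mu>0] by blast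
    then show False using ns retraction_iff_split_mono_kernel[OF ce ck] by blast
  qed
qed

lemma cond3_if_cond2: "cond2 C T \<Longrightarrow> cond3 C T"
  unfolding cond2_def cond3_def using stably_zero_if_dom_in_T mono_arr by blast

lemma image_epi_extends_if_stable_epi:
  assumes ge: "epi C g" and \<mu>: "is_kernel C g \<mu>" and se: "stable_epi C T g"
    and T': "T' \<in> T" and h: "h \<in> hom C (Dom C g) T'" and ej: "is_image_fact C (h \<cdot> \<mu>) e j"
  shows "\<exists>u\<in>hom C (Dom C g) (Cod C e). u \<cdot> \<mu> = e"
proof -
  obtain g' u where "u \<in> Arr C" "Dom C u = Dom C g" "Cod C u = Dom C j" "u \<cdot> \<mu> = e"
    using stable_epi_image_epi_extension[OF ge \<mu> se T' _ _ _ ej] h by (auto simp: hom_def)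
  then show ?thesis using image_factD[OF ej] by (auto simp: hom_def)
qed

lemma stable_balanced_if_cond3:
  assumes c3: "cond3 C T"
  shows "stable_balanced C T"
proof (rule stable_balanced_if_retractions)
  fix g \<mu> assume ge: "epi C g" and \<mu>: "is_kernel C g \<mu>" and \<mu>T: "Dom C \<mu> \<in> T"
    and se: "stable_epi C T g"
  have mm: "\<mu> \<in> Arr C" "Cod C \<mu> = Dom C g" using kernelD[OF \<mu>] by auto
  show "retraction C g"
  proof (rule ccontr)
    assume "\<not> retraction C g"
    then have "\<not> split_mono C \<mu>" using retraction_iff_split_mono_kernel[OF ge \<mu>] by blast
    then obtain T' h where T': "T' \<in> T" and h: "h \<in> hom C (Dom C g) T'" and nc: "no_coinciding C \<mu> h"
      using c3 kernel_mono[OF \<mu>] \<mu>T mm unfolding cond3_def by auto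
    obtain e j where ej: "is_image_fact C (h \<cdot> \<mu>) e j"
      using image_factorization_exists[of "h \<cdot> \<mu>"] h mm by (auto simp: hom_def)
    have "image_epi_extends C \<mu> h"
      unfolding image_epi_extends_def using ej image_epi_extends_if_stable_epi[OF ge \<mu> se T' h ej] mm
      by auto
    then show False using nc no_coinciding_iff[of \<mu> h] h mm by (auto simp: hom_def)
  qed
qed

lemma cond4_if_stable_balanced:
  assumes bal: "stable_balanced C T"
  shows "cond4 C T"
  unfolding cond4_def
proof (intro allI impI)
  fix f k assume ef: "epi C f" and k: "is_kernel C f k" and k0: "stably_zero k"
    and ext: "\<forall>T0\<in>T. \<forall>h\<in>hom C (Dom C f) T0. \<forall>e j. is_image_fact C (h \<cdot> k) e j \<longrightarrow>
      (\<exists>u\<in>hom C (Dom C f) (Cod C e). u \<cdot> k = e)"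
  have kk: "k \<in> Arr C" "Cod C k = Dom C f" using kernelD[OF k] by auto
  have "image_epi_extends C k h" if T0: "T0 \<in> T" and h: "h \<in> hom C (Dom C f) T0" for T0 h
  proof -
    obtain e j where ej: "is_image_fact C (h \<cdot> k) e j"
      using image_factorization_exists[of "h \<cdot> k"] h kk by (auto simp: hom_def)
    moreover obtain u where "u \<in> hom C (Dom C f) (Cod C e)" "u \<cdot> k = e" using ext T0 h ej by blast
    ultimately show ?thesis unfolding image_epi_extends_def using kk(2) by auto
  qed
  then have "stable_epi C T f" using stable_epiI_image_epi_extends[OF ef k] by blast
  then show "retraction C f" using stable_balanced_retraction[OF bal ef k k0] by blast
qed

lemma stable_balanced_if_cond4:
  assumes c4: "cond4 C T"
  shows "stable_balanced C T"
proof (rule stable_balanced_if_retractions)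
  fix g \<mu> assume ge: "epi C g" and \<mu>: "is_kernel C g \<mu>" and \<mu>T: "Dom C \<mu> \<in> T"
    and se: "stable_epi C T g"
  have "stably_zero \<mu>" using stably_zero_if_dom_in_T kernelD[OF \<mu>] \<mu>T by blast
  then show "retraction C g"
    using c4 ge \<mu> image_epi_extends_if_stable_epi[OF ge \<mu> se] unfolding cond4_def by blast
qed

lemma cond5_if_stable_balanced:
  assumes bal: "stable_balanced C T"
  shows "cond5 C T"
  unfolding cond5_def
proof (intro allI impI)
  fix f k assume ef: "epi C f" and nr: "\<not> retraction C f" and k: "is_kernel C f k" and kT: "Dom C k \<in> T"
  have f: "f \<in> Arr C" using epi_arr[OF ef] .
  have kk: "k \<in> Arr C" "Cod C k = Dom C f" using kernelD[OF k] by auto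
  show "\<exists>T'\<in>T. \<exists>h\<in>hom C (Dom C f) T'. \<forall>g\<in>hom C (Cod C f) T'.
      \<forall>k'. is_kernel C (h \<ominus> g \<cdot> f) k' \<longrightarrow> proper_sum C k k'"
  proof (rule ccontr)
    assume H: "\<not> (\<exists>T'\<in>T. \<exists>h\<in>hom C (Dom C f) T'. \<forall>g\<in>hom C (Cod C f) T'.
      \<forall>k'. is_kernel C (h \<ominus> g \<cdot> f) k' \<longrightarrow> proper_sum C k k')"
    have "\<exists>g k'. g \<in> hom C (Cod C f) T0 \<and> is_kernel C (h \<ominus> g \<cdot> f) k' \<and> jointly_epi C k k'"
      if T0: "T0 \<in> T" and h: "h \<in> hom C (Dom C f) T0" for T0 h
    proof -
      obtain g k' where g: "g \<in> hom C (Cod C f) T0" and k': "is_kernel C (h \<ominus> g \<cdot> f) k'"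
        and np: "\<not> proper_sum C k k'"
        using H T0 h by blast
      have "k' \<in> Arr C" "Cod C k' = Dom C f" using kernelD[OF k'] g h f by (auto simp: hom_def)
      then have "jointly_epi C k k'" using np proper_sum_iff_not_jointly_epi[of k k'] kk by simp
      then show ?thesis using g k' by blast
    qed
    then have "stable_epi C T f" using stable_epiI_jointly_epi_kernels[OF ef k] by blast
    then show False
      using stable_balanced_retraction[OF bal ef k stably_zero_if_dom_in_T[OF kk(1) kT]] nr by blast
  qed
qed

lemma stable_balanced_if_cond5:
  assumes c5: "cond5 C T"
  shows "stable_balanced C T"
proof (rule stable_balanced_if_retractions)
  fix g \<mu> assume ge: "epi C g" and \<mu>: "is_kernel C g \<mu>" and \<mu>T: "Dom C \<mu> \<in> T"
    and se: "stable_epi C T g"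
  have g: "g \<in> Arr C" using epi_arr[OF ge] .
  have mm: "\<mu> \<in> Arr C" "Cod C \<mu> = Dom C g" using kernelD[OF \<mu>] by auto
  show "retraction C g"
  proof (rule ccontr)
    assume "\<not> retraction C g"
    then obtain T' h where T': "T' \<in> T" and h: "h \<in> hom C (Dom C g) T'"
      and ps: "\<forall>g'\<in>hom C (Cod C g) T'. \<forall>k'. is_kernel C (h \<ominus> g' \<cdot> g) k' \<longrightarrow> proper_sum C \<mu> k'"
      using c5 ge \<mu> \<mu>T unfolding cond5_def by blast
    have hh: "h \<in> Arr C" "Dom C h = Dom C g" "Cod C h = T'" using h by (auto simp: hom_def)
    obtain e j where ej: "is_image_fact C (h \<cdot> \<mu>) e j"
      using image_factorization_exists[of "h \<cdot> \<mu>"] hh mm by auto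
    note im = image_factD[OF ej]
    obtain g' u where g': "g' \<in> Arr C" "Dom C g' = Cod C g" "Cod C g' = T'"
      and u: "u \<in> Arr C" "Dom C u = Dom C g" "Cod C u = Dom C j" "h \<ominus> g' \<cdot> g = j \<cdot> u" "u \<cdot> \<mu> = e"
      using stable_epi_image_epi_extension[OF ge \<mu> se T' hh ej] by blast
    obtain k' where k': "is_kernel C (h \<ominus> g' \<cdot> g) k'" using kernel_exists[of "h \<ominus> g' \<cdot> g"] hh g' g by auto
    have "proper_sum C \<mu> k'" using ps g' k' by (auto simp: hom_def)
    \<comment> \<open>\<open>h \<ominus> g' \<cdot> g = j \<cdot> u\<close> with \<open>j\<close> mono, so \<open>k'\<close> is a kernel of \<open>u\<close>;
      and \<open>u \<cdot> \<mu> = e\<close> is epi\<close>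
    moreover have uk: "is_kernel C u k'" using kernel_cancel_mono[OF im(3) _ u(1,3)] k' u(4) by simp
    moreover have "epi C u" using epi_cancel[of u \<mu>] im u mm by simp
    ultimately show False
      using jointly_epi_if_comp_epi[of u k' \<mu>] proper_sum_iff_not_jointly_epi[of \<mu> k'] kernelD[OF uk]
        im u mm by simp
  qed
qed

end

theorem theorem4p6:
  fixes C :: "('o, 'm) cat" and T :: "'o set"
  assumes "abelian C" and "proj_subcat C T"
  shows "(stable_balanced C T \<longleftrightarrow> cond2 C T)
       \<and> (stable_balanced C T \<longleftrightarrow> cond3 C T)
       \<and> (stable_balanced C T \<longleftrightarrow> cond4 C T)
       \<and> (stable_balanced C T \<longleftrightarrow> cond5 C T)"
proof -
  interpret stable_category C T using assms by unfold_locales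
  have "stable_balanced C T \<longleftrightarrow> cond2 C T" and "stable_balanced C T \<longleftrightarrow> cond3 C T"
    using cond2_if_stable_balanced cond3_if_cond2 stable_balanced_if_cond3 by blast+
  moreover have "stable_balanced C T \<longleftrightarrow> cond4 C T"
    using cond4_if_stable_balanced stable_balanced_if_cond4 by blast
  moreover have "stable_balanced C T \<longleftrightarrow> cond5 C T"
    using cond5_if_stable_balanced stable_balanced_if_cond5 by blast
  ultimately show ?thesis by blast
qed

end
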